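(* Under the standing assumptions, for all $z\in\mathbb C$: $\widehat U_2^{(0)}(z)=d^{(0)}(z)\,d^{(2)}(z)$ and $\widetilde U_2^{(1)}(z)=d^{(1)}(z)$; $\widehat U_2^{(2j)}(z)=\widehat U_2^{(2j-2)}(z)\,d^{(2j+2)}(z)$ for $1\le j\le n-1$; $\widetilde U_2^{(2j+1)}(z)=\widetilde U_2^{(2j-1)}(z)\,d^{(2j+1)}(z)$ for $1\le j\le n$. Consequently $\widehat U_2^{(2j)}=d^{(0)}d^{(2)}\cdots d^{(2j+2)}$ for $0\le j\le n-1$ and $\widetilde U_2^{(2j+1)}=d^{(1)}d^{(3)}\cdots d^{(2j+1)}$ for $0\le j\le n$.
   Context: Let $q,n\in\mathbb N$ and let $a<b$ be real numbers. All matrices are complex; $I_q$, $0_q$ are the $q\times q$ identity and zero matrices; for a matrix-valued function $F$, $F^*(\bar z)$ means $(F(\bar z))^*$. Let $s_0,\dots,s_{2n+1}$ be Hermitian $q\times q$ matrices and set $\widehat s_j:=-ab\,s_j+(a+b)s_{j+1}-s_{j+2}$. Define $H_{2,j}:=(\widehat s_{l+k})_{l,k=0}^{j}$ and $K_{1,j}:=(bs_{l+k}-s_{l+k+1})_{l,k=0}^{j}$. Standing assumption: $H_{2,n-1}$ and $K_{1,n}$ are positive definite. Let $T_0:=0_q$ and, for $j\ge1$, let $T_j$ be the $(j+1)\times(j+1)$ block matrix (blocks $q\times q$) with $I_q$ in block positions $(l+1,l)$, $l=0,\dots,j-1$, and $0_q$ elsewhere; $R_j(z):=(I_{(j+1)q}-zT_j)^{-1}$;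 $v_j:=\mathrm{col}(I_q,0_q,\dots,0_q)\in\mathbb C^{(j+1)q\times q}$. Let $u_{2,0}:=-(a+b)s_0+s_1$, $u_{2,j}:=\mathrm{col}(u_{2,0},-\widehat s_0,\dots,-\widehat s_{j-1})$, $\widetilde u_{1,j}:=\mathrm{col}(s_0,s_1-bs_0,\dots,s_j-bs_{j-1})$; for $j\ge1$, $Y_{2,j}:=\mathrm{col}(\widehat s_j,\dots,\widehat s_{2j-1})$, $\widetilde Y_{1,j}:=\mathrm{col}(bs_j-s_{j+1},\dots,bs_{2j-1}-s_{2j})$. Schur complements: $\widehat H_{2,0}:=\widehat s_0$, $\widehat H_{2,j}:=\widehat s_{2j}-Y_{2,j}^*H_{2,j-1}^{-1}Y_{2,j}$; $\widehat K_{1,0}:=bs_0-s_1$, $\widehat K_{1,j}:=bs_{2j}-s_{2j+1}-\widetilde Y_{1,j}^*K_{1,j-1}^{-1}\widetilde Y_{1,j}$ ($j\ge1$). Polynomials: $P_{2,0}:=I_q$, $Q_{2,0}(z):=-(u_{2,0}+zs_0)$, $\Gamma_{1,0}:=I_q$, $\Theta_{1,0}:=s_0$; for $j\ge1$: $P_{2,j}(z):=(-Y_{2,j}^*H_{2,j-1}^{-1},I_q)R_j(z)v_j$, $Q_{2,j}(z):=-(-Y_{2,j}^*H_{2,j-1}^{-1},I_q)R_j(z)(u_{2,j}+zv_js_0)$, $\Gamma_{1,j}(z):=(-\widetilde Y_{1,j}^*K_{1,j-1}^{-1},I_q)R_j(z)v_j$, $\Theta_{1,j}(z):=(-\widetilde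 Y_{1,j}^*K_{1,j-1}^{-1},I_q)R_j(z)\widetilde u_{1,j}$. Auxiliary matrices: for $0\le j\le n-1$, $\widehat U_2^{(2j)}(z)=\begin{pmatrix}\widehat\alpha&\widehat\beta\\ \widehat\gamma&\widehat\delta\end{pmatrix}$ with $\widehat\alpha=I_q-(z-a)(u_{2,j}^*+zs_0v_j^* )R_j^*(\bar z)H_{2,j}^{-1}R_j(a)v_j$, $\widehat\beta=(z-a)\big(s_0+(u_{2,j}^*+zs_0v_j^* )R_j^*(\bar z)H_{2,j}^{-1}R_j(a)(u_{2,j}+av_js_0)\big)$, $\widehat\gamma=-(z-a)v_j^*R_j^*(\bar z)H_{2,j}^{-1}R_j(a)v_j$, $\widehat\delta=I_q+(z-a)v_j^*R_j^*(\bar z)H_{2,j}^{-1}R_j(a)(u_{2,j}+av_js_0)$. For $0\le j\le n$, $\widetilde U_2^{(2j+1)}(z)=\begin{pmatrix}I_q-(z-a)\widetilde u_{1,j}^*R_j^*(\bar z)K_{1,j}^{-1}R_j(a)v_j & (z-a)\widetilde u_{1,j}^*R_j^*(\bar z)K_{1,j}^{-1}R_j(a)\widetilde u_{1,j}\\ -(z-a)v_j^*R_j^*(\bar z)K_{1,j}^{-1}R_j(a)v_j & I_q+(z-a)v_j^*R_j^*(\bar z)K_{1,j}^{-1}R_j(a)\widetilde u_{1,j}\end{pmatrix}$. Blaschke–Potapov factors: $d^{(0)}(z):=\begin{pmatrix}I_q&(z-a)s_0\\0_q&I_q\end{pmatrix}$; for $0\le j\le n-1$, $d^{(2j+2)}(z):=\begin{pmatrix}I_q+(z-a)Q_{2,j}^*(a)\widehat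 H_{2,j}^{-1}P_{2,j}(a) & (z-a)Q_{2,j}^*(a)\widehat H_{2,j}^{-1}Q_{2,j}(a)\\ -(z-a)P_{2,j}^*(a)\widehat H_{2,j}^{-1}P_{2,j}(a) & I_q-(z-a)P_{2,j}^*(a)\widehat H_{2,j}^{-1}Q_{2,j}(a)\end{pmatrix}$; for $0\le j\le n$, $d^{(2j+1)}(z):=\begin{pmatrix}I_q-(z-a)\Theta_{1,j}^*(a)\widehat K_{1,j}^{-1}\Gamma_{1,j}(a) & (z-a)\Theta_{1,j}^*(a)\widehat K_{1,j}^{-1}\Theta_{1,j}(a)\\ -(z-a)\Gamma_{1,j}^*(a)\widehat K_{1,j}^{-1}\Gamma_{1,j}(a) & I_q+(z-a)\Gamma_{1,j}^*(a)\widehat K_{1,j}^{-1}\Theta_{1,j}(a)\end{pmatrix}$. *)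

theory Defs
  imports Complex_Main "Jordan_Normal_Form.Matrix"
begin

definition adj_m :: "complex mat \<Rightarrow> complex mat" where
  "adj_m A = transpose_mat (map_mat cnj A)"

text \<open>Inverse of a square matrix (meaningful when it is invertible).\<close>
definition minv :: "complex mat \<Rightarrow> complex mat" where
  "minv A = (SOME B. B \<in> carrier_mat (dim_row A) (dim_row A) \<and>
                      A * B = 1\<^sub>m (dim_row A) \<and> B * A = 1\<^sub>m (dim_row A))"

definition pos_def_mat :: "nat \<Rightarrow> complex mat \<Rightarrow> bool" where
  "pos_def_mat N A \<longleftrightarrow> A \<in> carrier_mat N N \<and> adj_m A = A \<and>
     (\<forall>v \<in> carrier_vec N. v \<noteq> 0\<^sub>v N \<longrightarrow>
        (let c = (\<Sum>i<N. cnj (v $ i) * (A *\<^sub>v v) $ i) in Im c = 0 \<and> Re c > 0))"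

definition blockmat :: "nat \<Rightarrow> nat \<Rightarrow> nat \<Rightarrow> (nat \<Rightarrow> nat \<Rightarrow> complex mat) \<Rightarrow> complex mat" where
  "blockmat q m p B = mat (m * q) (p * q) (\<lambda>(i, k). B (i div q) (k div q) $$ (i mod q, k mod q))"

definition hcat :: "complex mat \<Rightarrow> complex mat \<Rightarrow> complex mat" where
  "hcat A B = four_block_mat A B (0\<^sub>m 0 (dim_col A)) (0\<^sub>m 0 (dim_col B))"

fun mprod :: "(nat \<Rightarrow> complex mat) \<Rightarrow> nat \<Rightarrow> complex mat" where
  "mprod f 0 = f 0"
| "mprod f (Suc k) = mprod f k * f (Suc k)"

definition shat :: "(nat \<Rightarrow> complex mat) \<Rightarrow> real \<Rightarrow> real \<Rightarrow> nat \<Rightarrow> complex mat" where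
  "shat s a b j = complex_of_real (- (a * b)) \<cdot>\<^sub>m s j + complex_of_real (a + b) \<cdot>\<^sub>m s (j + 1) - s (j + 2)"

definition H2 :: "nat \<Rightarrow> (nat \<Rightarrow> complex mat) \<Rightarrow> real \<Rightarrow> real \<Rightarrow> nat \<Rightarrow> complex mat" where
  "H2 q s a b j = blockmat q (j + 1) (j + 1) (\<lambda>l k. shat s a b (l + k))"

definition K1 :: "nat \<Rightarrow> (nat \<Rightarrow> complex mat) \<Rightarrow> real \<Rightarrow> nat \<Rightarrow> complex mat" where
  "K1 q s b j = blockmat q (j + 1) (j + 1) (\<lambda>l k. complex_of_real b \<cdot>\<^sub>m s (l + k) - s (l + k + 1))"

definition Tm :: "nat \<Rightarrow> nat \<Rightarrow> complex mat" where
  "Tm q j = blockmat q (j + 1) (j + 1) (\<lambda>l k. if l = k + 1 then 1\<^sub>m q else 0\<^sub>m q q)"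

definition Rm :: "nat \<Rightarrow> nat \<Rightarrow> complex \<Rightarrow> complex mat" where
  "Rm q j z = minv (1\<^sub>m ((j + 1) * q) - z \<cdot>\<^sub>m Tm q j)"

definition vm :: "nat \<Rightarrow> nat \<Rightarrow> complex mat" where
  "vm q j = blockmat q (j + 1) 1 (\<lambda>l k. if l = 0 then 1\<^sub>m q else 0\<^sub>m q q)"

definition u20 :: "(nat \<Rightarrow> complex mat) \<Rightarrow> real \<Rightarrow> real \<Rightarrow> complex mat" where
  "u20 s a b = complex_of_real (- (a + b)) \<cdot>\<^sub>m s 0 + s 1"

definition u2 :: "nat \<Rightarrow> (nat \<Rightarrow> complex mat) \<Rightarrow> real \<Rightarrow> real \<Rightarrow> nat \<Rightarrow> complex mat" where
  "u2 q s a b j = blockmat q (j + 1) 1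
     (\<lambda>l k. if l = 0 then u20 s a b else - shat s a b (l - 1))"

definition ut1 :: "nat \<Rightarrow> (nat \<Rightarrow> complex mat) \<Rightarrow> real \<Rightarrow> nat \<Rightarrow> complex mat" where
  "ut1 q s b j = blockmat q (j + 1) 1
     (\<lambda>l k. if l = 0 then s 0 else s l - complex_of_real b \<cdot>\<^sub>m s (l - 1))"

definition Y2 :: "nat \<Rightarrow> (nat \<Rightarrow> complex mat) \<Rightarrow> real \<Rightarrow> real \<Rightarrow> nat \<Rightarrow> complex mat" where
  "Y2 q s a b j = blockmat q j 1 (\<lambda>l k. shat s a b (j + l))"

definition Yt1 :: "nat \<Rightarrow> (nat \<Rightarrow> complex mat) \<Rightarrow> real \<Rightarrow> nat \<Rightarrow> complex mat" where
  "Yt1 q s b j = blockmat q j 1 (\<lambda>l k. complex_of_real b \<cdot>\<^sub>m s (j + l) - s (j + l + 1))"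

definition H2hat :: "nat \<Rightarrow> (nat \<Rightarrow> complex mat) \<Rightarrow> real \<Rightarrow> real \<Rightarrow> nat \<Rightarrow> complex mat" where
  "H2hat q s a b j = (if j = 0 then shat s a b 0
     else shat s a b (2 * j) - adj_m (Y2 q s a b j) * minv (H2 q s a b (j - 1)) * Y2 q s a b j)"

definition K1hat :: "nat \<Rightarrow> (nat \<Rightarrow> complex mat) \<Rightarrow> real \<Rightarrow> nat \<Rightarrow> complex mat" where
  "K1hat q s b j = (if j = 0 then complex_of_real b \<cdot>\<^sub>m s 0 - s 1
     else complex_of_real b \<cdot>\<^sub>m s (2 * j) - s (2 * j + 1)
          - adj_m (Yt1 q s b j) * minv (K1 q s b (j - 1)) * Yt1 q s b j)"

definition row2 :: "nat \<Rightarrow> (nat \<Rightarrow> complex mat) \<Rightarrow> real \<Rightarrow> real \<Rightarrow> nat \<Rightarrow> complex mat" where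
  "row2 q s a b j = hcat (- (adj_m (Y2 q s a b j) * minv (H2 q s a b (j - 1)))) (1\<^sub>m q)"

definition row1 :: "nat \<Rightarrow> (nat \<Rightarrow> complex mat) \<Rightarrow> real \<Rightarrow> nat \<Rightarrow> complex mat" where
  "row1 q s b j = hcat (- (adj_m (Yt1 q s b j) * minv (K1 q s b (j - 1)))) (1\<^sub>m q)"

definition P2 :: "nat \<Rightarrow> (nat \<Rightarrow> complex mat) \<Rightarrow> real \<Rightarrow> real \<Rightarrow> nat \<Rightarrow> complex \<Rightarrow> complex mat" where
  "P2 q s a b j z = (if j = 0 then 1\<^sub>m q else row2 q s a b j * Rm q j z * vm q j)"

definition Q2 :: "nat \<Rightarrow> (nat \<Rightarrow> complex mat) \<Rightarrow> real \<Rightarrow> real \<Rightarrow> nat \<Rightarrow> complex \<Rightarrow> complex mat" where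
  "Q2 q s a b j z = (if j = 0 then - (u20 s a b + z \<cdot>\<^sub>m s 0)
     else - (row2 q s a b j * Rm q j z * (u2 q s a b j + z \<cdot>\<^sub>m (vm q j * s 0))))"

definition Gam1 :: "nat \<Rightarrow> (nat \<Rightarrow> complex mat) \<Rightarrow> real \<Rightarrow> nat \<Rightarrow> complex \<Rightarrow> complex mat" where
  "Gam1 q s b j z = (if j = 0 then 1\<^sub>m q else row1 q s b j * Rm q j z * vm q j)"

definition Theta1 :: "nat \<Rightarrow> (nat \<Rightarrow> complex mat) \<Rightarrow> real \<Rightarrow> nat \<Rightarrow> complex \<Rightarrow> complex mat" where
  "Theta1 q s b j z = (if j = 0 then s 0 else row1 q s b j * Rm q j z * ut1 q s b j)"

text \<open>Auxiliary matrices hat U_2^{(2j)} and tilde U_2^{(2j+1)}.\<close>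
definition U2hat :: "nat \<Rightarrow> (nat \<Rightarrow> complex mat) \<Rightarrow> real \<Rightarrow> real \<Rightarrow> nat \<Rightarrow> complex \<Rightarrow> complex mat" where
  "U2hat q s a b j z =
    (let za = z - complex_of_real a;
         Ra = Rm q j (complex_of_real a);
         Rs = adj_m (Rm q j (cnj z));
         Hi = minv (H2 q s a b j);
         v = vm q j; u = u2 q s a b j;
         w = adj_m u + z \<cdot>\<^sub>m (s 0 * adj_m v);
         ua = u + complex_of_real a \<cdot>\<^sub>m (v * s 0)
     in four_block_mat
          (1\<^sub>m q - za \<cdot>\<^sub>m (w * Rs * Hi * Ra * v))
          (za \<cdot>\<^sub>m (s 0 + w * Rs * Hi * Ra * ua))
          (- (za \<cdot>\<^sub>m (adj_m v * Rs * Hi * Ra * v)))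
          (1\<^sub>m q + za \<cdot>\<^sub>m (adj_m v * Rs * Hi * Ra * ua)))"

definition U2til :: "nat \<Rightarrow> (nat \<Rightarrow> complex mat) \<Rightarrow> real \<Rightarrow> real \<Rightarrow> nat \<Rightarrow> complex \<Rightarrow> complex mat" where
  "U2til q s a b j z =
    (let za = z - complex_of_real a;
         Ra = Rm q j (complex_of_real a);
         Rs = adj_m (Rm q j (cnj z));
         Ki = minv (K1 q s b j);
         v = vm q j; u = ut1 q s b j
     in four_block_mat
          (1\<^sub>m q - za \<cdot>\<^sub>m (adj_m u * Rs * Ki * Ra * v))
          (za \<cdot>\<^sub>m (adj_m u * Rs * Ki * Ra * u))
          (- (za \<cdot>\<^sub>m (adj_m v * Rs * Ki * Ra * v)))
          (1\<^sub>m q + za \<cdot>\<^sub>m (adj_m v * Rs * Ki * Ra * u)))"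

text \<open>Blaschke--Potapov factors: d0 = d^{(0)}, deven j = d^{(2j+2)}, dodd j = d^{(2j+1)}.\<close>
definition d0 :: "nat \<Rightarrow> (nat \<Rightarrow> complex mat) \<Rightarrow> real \<Rightarrow> complex \<Rightarrow> complex mat" where
  "d0 q s a z = four_block_mat (1\<^sub>m q) ((z - complex_of_real a) \<cdot>\<^sub>m s 0) (0\<^sub>m q q) (1\<^sub>m q)"

definition deven :: "nat \<Rightarrow> (nat \<Rightarrow> complex mat) \<Rightarrow> real \<Rightarrow> real \<Rightarrow> nat \<Rightarrow> complex \<Rightarrow> complex mat" where
  "deven q s a b j z =
    (let za = z - complex_of_real a;
         P = P2 q s a b j (complex_of_real a); Q = Q2 q s a b j (complex_of_real a);
         Hi = minv (H2hat q s a b j)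
     in four_block_mat
          (1\<^sub>m q + za \<cdot>\<^sub>m (adj_m Q * Hi * P))
          (za \<cdot>\<^sub>m (adj_m Q * Hi * Q))
          (- (za \<cdot>\<^sub>m (adj_m P * Hi * P)))
          (1\<^sub>m q - za \<cdot>\<^sub>m (adj_m P * Hi * Q)))"

definition dodd :: "nat \<Rightarrow> (nat \<Rightarrow> complex mat) \<Rightarrow> real \<Rightarrow> real \<Rightarrow> nat \<Rightarrow> complex \<Rightarrow> complex mat" where
  "dodd q s a b j z =
    (let za = z - complex_of_real a;
         G = Gam1 q s b j (complex_of_real a); Th = Theta1 q s b j (complex_of_real a);
         Ki = minv (K1hat q s b j)
     in four_block_mat
          (1\<^sub>m q - za \<cdot>\<^sub>m (adj_m Th * Ki * G))
          (za \<cdot>\<^sub>m (adj_m Th * Ki * Th))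
          (- (za \<cdot>\<^sub>m (adj_m G * Ki * G)))
          (1\<^sub>m q + za \<cdot>\<^sub>m (adj_m G * Ki * Th)))"

end

theory Submission
  imports Defs "Jordan_Normal_Form.Determinant"
begin

text \<open>
  Both \<open>U2hat j\<close> and \<open>U2til j\<close> are resolvent matrices, with blocks
  \<open>u\<^sup>* R(cnj z)\<^sup>* K\<^sup>-\<^sup>1 R(a) v\<close>, of a block Hankel matrix \<open>K\<close> (\<open>H2 j\<close> resp. \<open>K1 j\<close>),
  where \<open>R(w) = (I - w T)\<^sup>-\<^sup>1\<close> for the block shift \<open>T\<close> and the column \<open>u\<close> is tied to \<open>K\<close> by the
  Lyapunov identity \<open>T K - K T\<^sup>* = v u\<^sup>* - u v\<^sup>*\<close>. Splitting off the last block row and column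
  gives \<open>K\<^sup>-\<^sup>1 = F K'\<^sup>-\<^sup>1 F\<^sup>* + W\<^sup>* Kh\<^sup>-\<^sup>1 W\<close>, with the leading section \<open>K'\<close>, its Schur complement
  \<open>Kh\<close> and \<open>W = (-Y\<^sup>* K'\<^sup>-\<^sup>1, I)\<close>. As \<open>F\<^sup>*\<close> intertwines the shifts, the first summand reproduces
  the resolvent matrix of \<open>K'\<close>; the resolvent identity and the Lyapunov identity turn the
  second summand into exactly the cross terms of a product with the Blaschke--Potapov factor
  built from \<open>W R(a) u\<close>, \<open>W R(a) v\<close> and \<open>Kh\<^sup>-\<^sup>1\<close>. For the even chain, replacing \<open>u\<close> by
  \<open>u + a v s\<^sub>0\<close> first splits off \<open>d0\<close>.
\<close>

lemma adj_m_dims[simp]: "dim_row (adj_m A) = dim_col A" "dim_col (adj_m A) = dim_row A"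
  by (auto simp: adj_m_def)

lemma adj_m_index[simp]: "i < dim_col A \<Longrightarrow> k < dim_row A \<Longrightarrow> adj_m A $$ (i,k) = cnj (A $$ (k,i))"
  by (auto simp: adj_m_def)

lemma adj_m_carrier[simp,intro]: "A \<in> carrier_mat n m \<Longrightarrow> adj_m A \<in> carrier_mat m n"
  unfolding carrier_mat_def adj_m_def by simp

lemma adj_m_mult: assumes "A \<in> carrier_mat n m" "B \<in> carrier_mat m p"
  shows "adj_m (A * B) = adj_m B * adj_m A"
  apply (rule eq_matI)
  using assms by (auto simp: scalar_prod_def mult.commute)

lemma adj_m_add: assumes "A \<in> carrier_mat n m" "B \<in> carrier_mat n m"
  shows "adj_m (A + B) = adj_m A + adj_m B"
  by (rule eq_matI, insert assms, auto)

lemma adj_m_minus: assumes "A \<in> carrier_mat n m" "B \<in> carrier_mat n m"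
  shows "adj_m (A - B) = adj_m A - adj_m B"
  by (rule eq_matI, insert assms, auto)

lemma adj_m_uminus: "adj_m (- A) = - adj_m A"
  by (rule eq_matI, auto)

lemma adj_m_smult: "adj_m (c \<cdot>\<^sub>m A) = cnj c \<cdot>\<^sub>m adj_m A"
  by (rule eq_matI, auto)

lemma adj_m_adj_m[simp]: "adj_m (adj_m A) = A"
  by (rule eq_matI, auto)

lemma adj_m_one[simp]: "adj_m (1\<^sub>m n) = 1\<^sub>m n"
  by (rule eq_matI, auto)

lemma adj_m_zero[simp]: "adj_m (0\<^sub>m n m) = 0\<^sub>m m n"
  by (rule eq_matI, auto)

lemma det_nonzero_imp_inverse: assumes A: "(A::complex mat) \<in> carrier_mat n n" and d: "det A \<noteq> 0"
  shows "\<exists>B. B \<in> carrier_mat n n \<and> A * B = 1\<^sub>m n \<and> B * A = 1\<^sub>m n"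
proof -
  from det_non_zero_imp_unit[OF A d, of "()"]
  show ?thesis unfolding Units_def ring_mat_def by auto
qed

lemma minv_inverse: assumes A: "(A::complex mat) \<in> carrier_mat n n" and d: "det A \<noteq> 0"
  shows "minv A \<in> carrier_mat n n" "A * minv A = 1\<^sub>m n" "minv A * A = 1\<^sub>m n"
proof -
  have dr: "dim_row A = n" using A by auto
  have "\<exists>B. B \<in> carrier_mat (dim_row A) (dim_row A) \<and> A * B = 1\<^sub>m (dim_row A) \<and> B * A = 1\<^sub>m (dim_row A)"
    using det_nonzero_imp_inverse[OF A d] dr by simp
  from someI_ex[OF this] show "minv A \<in> carrier_mat n n" "A * minv A = 1\<^sub>m n" "minv A * A = 1\<^sub>m n"
    unfolding minv_def dr by auto
qed

lemma det_nonzero_of_right_inverse: assumes A: "(A::complex mat) \<in> carrier_mat n n" and B: "B \<in> carrier_mat n n"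
  and AB: "A * B = 1\<^sub>m n" shows "det A \<noteq> 0"
  using det_mult[OF A B] AB by auto

lemma minv_eqI: assumes A: "(A::complex mat) \<in> carrier_mat n n" and B: "B \<in> carrier_mat n n"
  and AB: "A * B = 1\<^sub>m n" shows "minv A = B"
proof -
  have d: "det A \<noteq> 0" by (rule det_nonzero_of_right_inverse[OF A B AB])
  note m = minv_inverse[OF A d]
  have "minv A = minv A * (A * B)" using AB m by simp
  also have "\<dots> = (minv A * A) * B" using assoc_mult_mat[OF m(1) A B] by simp
  also have "\<dots> = B" using m B by simp
  finally show ?thesis .
qed

lemma minv_hermitian: assumes A: "(A::complex mat) \<in> carrier_mat n n" and d: "det A \<noteq> 0" and h: "adj_m A = A"
  shows "adj_m (minv A) = minv A"
proof -
  note m = minv_inverse[OF A d]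
  have "A * adj_m (minv A) = adj_m (minv A * A)"
    using adj_m_mult[OF m(1) A] h by simp
  also have "\<dots> = 1\<^sub>m n" using m by simp
  finally have "minv A = adj_m (minv A)" using minv_eqI[OF A _ ] m(1) by auto
  then show ?thesis by simp
qed

text \<open>The library laws for \<open>mat\<close> carry carrier hypotheses; stated with dimension equalities they
  become conditional rewrite rules whose side conditions the simplifier discharges from
  dimension facts.\<close>

lemma assoc_mult_dim: "dim_col A = dim_row B \<Longrightarrow> dim_col B = dim_row C \<Longrightarrow> (A::complex mat) * B * C = A * (B * C)"
  by (rule assoc_mult_mat[of A "dim_row A" "dim_col A" B "dim_col B" C "dim_col C"], auto)

lemma mult_add_distrib_dim: "dim_col A = dim_row B \<Longrightarrow> dim_row B = dim_row C \<Longrightarrow> dim_col B = dim_col C \<Longrightarrow>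
  (A::complex mat) * (B + C) = A * B + A * C"
  by (rule mult_add_distrib_mat[of A "dim_row A" "dim_col A" B "dim_col B" C], auto)

lemma add_mult_distrib_dim: "dim_col A = dim_row C \<Longrightarrow> dim_row A = dim_row B \<Longrightarrow> dim_col A = dim_col B \<Longrightarrow>
  ((A::complex mat) + B) * C = A * C + B * C"
  by (rule add_mult_distrib_mat[of A "dim_row A" "dim_col A" B C "dim_col C"], auto)

lemma mult_minus_distrib_dim: "dim_col A = dim_row B \<Longrightarrow> dim_row B = dim_row C \<Longrightarrow> dim_col B = dim_col C \<Longrightarrow>
  (A::complex mat) * (B - C) = A * B - A * C"
  by (rule mult_minus_distrib_mat[of A "dim_row A" "dim_col A" B "dim_col B" C], auto)

lemma minus_mult_distrib_dim: "dim_col A = dim_row C \<Longrightarrow> dim_row A = dim_row B \<Longrightarrow> dim_col A = dim_col B \<Longrightarrow>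
  ((A::complex mat) - B) * C = A * C - B * C"
  by (rule minus_mult_distrib_mat[of A "dim_row A" "dim_col A" B C "dim_col C"], auto)

lemma mult_smult_dim: "dim_col A = dim_row B \<Longrightarrow> (A::complex mat) * (c \<cdot>\<^sub>m B) = c \<cdot>\<^sub>m (A * B)"
  by (rule mult_smult_distrib[of A "dim_row A" "dim_col A" B "dim_col B"], auto)

lemma smult_mult_dim: "dim_col A = dim_row B \<Longrightarrow> (c \<cdot>\<^sub>m (A::complex mat)) * B = c \<cdot>\<^sub>m (A * B)"
  by (rule mult_smult_assoc_mat[of A "dim_row A" "dim_col A" B "dim_col B"], auto)

lemma adj_m_mult_dim: "dim_col A = dim_row B \<Longrightarrow> adj_m (A * B) = adj_m B * adj_m A"
  by (rule adj_m_mult[of A "dim_row A" "dim_col A" B "dim_col B"], auto)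

lemma adj_m_add_dim: "dim_row A = dim_row B \<Longrightarrow> dim_col A = dim_col B \<Longrightarrow> adj_m (A + B) = adj_m A + adj_m B"
  by (rule adj_m_add[of A "dim_row A" "dim_col A" B], auto)

lemma adj_m_minus_dim: "dim_row A = dim_row B \<Longrightarrow> dim_col A = dim_col B \<Longrightarrow> adj_m (A - B) = adj_m A - adj_m B"
  by (rule adj_m_minus[of A "dim_row A" "dim_col A" B], auto)

lemma mult_zero_mat_dim: "dim_col A = n \<Longrightarrow> (A::complex mat) * 0\<^sub>m n m = 0\<^sub>m (dim_row A) m"
  by (rule eq_matI, auto simp: scalar_prod_def)
lemma zero_mult_mat_dim: "dim_row A = n \<Longrightarrow> 0\<^sub>m m n * (A::complex mat) = 0\<^sub>m m (dim_col A)"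
  by (rule eq_matI, auto simp: scalar_prod_def)

lemmas mat_dim_simps = assoc_mult_dim mult_add_distrib_dim add_mult_distrib_dim mult_minus_distrib_dim minus_mult_distrib_dim mult_smult_dim smult_mult_dim
  adj_m_mult_dim adj_m_add_dim adj_m_minus_dim adj_m_uminus adj_m_smult

lemma minus_eq_imp_eq_add: assumes "X - Y = Z" "X \<in> carrier_mat n m" "Y \<in> carrier_mat n m"
  shows "X = Z + (Y::complex mat)"
proof (rule eq_matI)
  fix i j assume ij: "i < dim_row (Z + Y)" "j < dim_col (Z + Y)"
  have "(X - Y) $$ (i,j) = Z $$ (i,j)" using assms by simp
  then show "X $$ (i,j) = (Z + Y) $$ (i,j)" using ij assms by auto
qed (use assms in auto)

lemma add_minus_cancel_mat: assumes "D - B = 0\<^sub>m n m" "A \<in> carrier_mat n m" "B \<in> carrier_mat n m" "D \<in> carrier_mat n m"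
  shows "A + B - D = (A::complex mat)"
proof (rule eq_matI)
  fix i j assume ij: "i < dim_row A" "j < dim_col A"
  have "(D - B) $$ (i,j) = 0\<^sub>m n m $$ (i,j)" by (simp only: assms(1))
  then have "D $$ (i,j) - B $$ (i,j) = 0" using assms(2-4) ij by simp
  then have "B $$ (i,j) = D $$ (i,j)" by simp
  then show "(A + B - D) $$ (i,j) = A $$ (i,j)" using ij assms by auto
qed (use assms in auto)

lemma difference_of_smult_shifts: assumes "P - c \<cdot>\<^sub>m X = A" "P - d \<cdot>\<^sub>m X = B" "P \<in> carrier_mat n m" "X \<in> carrier_mat n m"
  shows "B - A = (c - d) \<cdot>\<^sub>m (X::complex mat)"
proof (rule eq_matI)
  fix i j assume ij: "i < dim_row ((c - d) \<cdot>\<^sub>m X)" "j < dim_col ((c - d) \<cdot>\<^sub>m X)"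
  have "(P - c \<cdot>\<^sub>m X) $$ (i,j) = A $$ (i,j)" by (simp only: assms(1))
  moreover have "(P - d \<cdot>\<^sub>m X) $$ (i,j) = B $$ (i,j)" by (simp only: assms(2))
  moreover have cA: "A \<in> carrier_mat n m" unfolding assms(1)[symmetric] using assms(3,4) by auto
  moreover have cB: "B \<in> carrier_mat n m" unfolding assms(2)[symmetric] using assms(3,4) by auto
  ultimately show "(B - A) $$ (i,j) = ((c - d) \<cdot>\<^sub>m X) $$ (i,j)" using ij assms(3,4)
    by (auto simp: algebra_simps)
qed (use assms in \<open>auto\<close>)

lemma smult_add_mat_dim: "dim_row A = dim_row B \<Longrightarrow> dim_col A = dim_col B \<Longrightarrow> c \<cdot>\<^sub>m ((A::complex mat) + B) = c \<cdot>\<^sub>m A + c \<cdot>\<^sub>m B"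
  by (rule eq_matI, auto simp: algebra_simps)
lemma smult_minus_mat_dim: "dim_row A = dim_row B \<Longrightarrow> dim_col A = dim_col B \<Longrightarrow> c \<cdot>\<^sub>m ((A::complex mat) - B) = c \<cdot>\<^sub>m A - c \<cdot>\<^sub>m B"
  by (rule eq_matI, auto simp: algebra_simps)
lemma minus_add_commute_mat: "A \<in> carrier_mat n m \<Longrightarrow> B \<in> carrier_mat n m \<Longrightarrow> C \<in> carrier_mat n m \<Longrightarrow>
   (A - B) + C = C + A - (B::complex mat)"
  by (rule eq_matI, auto simp: algebra_simps)

lemma smult_uminus_mat: "c \<cdot>\<^sub>m (- (A::complex mat)) = - (c \<cdot>\<^sub>m A)"
  by (rule eq_matI) auto

lemma one_plus_uminus: "A \<in> carrier_mat q q \<Longrightarrow> 1\<^sub>m q + - (A::complex mat) = 1\<^sub>m q - A"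
  by (rule eq_matI) auto
lemma one_minus_uminus: "A \<in> carrier_mat q q \<Longrightarrow> 1\<^sub>m q - - (A::complex mat) = 1\<^sub>m q + A"
  by (rule eq_matI) auto

text \<open>Block products are computed with \<open>mult_four_block_mat\<close>; the resulting non-commutative
  identities between \<open>q \<times> q\<close> blocks are normalized in the ring \<open>ring_mat TYPE(complex) q ()\<close>.\<close>

lemma square_carrier_closed:
  "A \<in> carrier_mat q q \<Longrightarrow> B \<in> carrier_mat q q \<Longrightarrow> A * B \<in> carrier_mat q q"
  "A \<in> carrier_mat q q \<Longrightarrow> B \<in> carrier_mat q q \<Longrightarrow> A + B \<in> carrier_mat q q"
  "A \<in> carrier_mat q q \<Longrightarrow> B \<in> carrier_mat q q \<Longrightarrow> A - B \<in> carrier_mat q q"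
  "A \<in> carrier_mat q q \<Longrightarrow> - A \<in> carrier_mat q q"
  "1\<^sub>m q \<in> carrier_mat q q"
  by auto

lemma a_inv_ring_mat: assumes "A \<in> carrier_mat q q"
  shows "a_inv (ring_mat TYPE(complex) q ()) A = - A"
proof -
  interpret R: ring "ring_mat TYPE(complex) q ()" by (rule ring_mat)
  have "A \<oplus>\<^bsub>ring_mat TYPE(complex) q ()\<^esub> (- A) = \<zero>\<^bsub>ring_mat TYPE(complex) q ()\<^esub>"
    using assms by (simp add: ring_mat_simps minus_add_uminus_mat[symmetric])
  then show ?thesis using assms
    by (metis R.add.inv_closed R.add.inv_comm R.add.inv_equality R.minus_equality ring_mat_simps(5) uminus_carrier_mat)
qed

lemma ring_mat_minus:
  fixes A B :: "complex mat"
  shows "A \<in> carrier_mat q q \<Longrightarrow> B \<in> carrier_mat q q \<Longrightarrow> A \<ominus>\<^bsub>ring_mat TYPE(complex) q ()\<^esub> B = A - B"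
  and "A \<in> carrier_mat q q \<Longrightarrow> \<ominus>\<^bsub>ring_mat TYPE(complex) q ()\<^esub> A = - A"
proof -
  interpret R: ring "ring_mat TYPE(complex) q ()" by (rule ring_mat)
  show "A \<in> carrier_mat q q \<Longrightarrow> B \<in> carrier_mat q q \<Longrightarrow> A \<ominus>\<^bsub>ring_mat TYPE(complex) q ()\<^esub> B = A - B"
    by (simp add: R.minus_eq a_inv_ring_mat ring_mat_simps minus_add_uminus_mat)
qed (simp_all add: a_inv_ring_mat ring_mat_simps)

text \<open>\<open>resolvent_matrix q (z - a) u v (R(cnj z)\<^sup>*) (K\<^sup>-\<^sup>1) (R(a))\<close> is the common shape of \<open>U2hat\<close> and
  \<open>U2til\<close>, and \<open>bp_factor\<close> that of \<open>deven\<close> and \<open>dodd\<close>.\<close>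

definition resolvent_matrix :: "nat \<Rightarrow> complex \<Rightarrow> complex mat \<Rightarrow> complex mat \<Rightarrow> complex mat \<Rightarrow> complex mat \<Rightarrow> complex mat \<Rightarrow> complex mat" where
  "resolvent_matrix q za u v Rs Ki Ra = four_block_mat
          (1\<^sub>m q - za \<cdot>\<^sub>m (adj_m u * Rs * Ki * Ra * v))
          (za \<cdot>\<^sub>m (adj_m u * Rs * Ki * Ra * u))
          (- (za \<cdot>\<^sub>m (adj_m v * Rs * Ki * Ra * v)))
          (1\<^sub>m q + za \<cdot>\<^sub>m (adj_m v * Rs * Ki * Ra * u))"

definition bp_factor :: "nat \<Rightarrow> complex \<Rightarrow> complex mat \<Rightarrow> complex mat \<Rightarrow> complex mat \<Rightarrow> complex mat" where
  "bp_factor q za X Y M = four_block_mat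
          (1\<^sub>m q - za \<cdot>\<^sub>m (adj_m X * M * Y))
          (za \<cdot>\<^sub>m (adj_m X * M * X))
          (- (za \<cdot>\<^sub>m (adj_m Y * M * Y)))
          (1\<^sub>m q + za \<cdot>\<^sub>m (adj_m Y * M * X))"

lemma four_block_bp_mult: fixes huv huu hvu hvv bu bv M Bu Bv :: "complex mat"
  assumes c: "huv \<in> carrier_mat q q" "huu \<in> carrier_mat q q" "hvu \<in> carrier_mat q q" "hvv \<in> carrier_mat q q"
    "bu \<in> carrier_mat q q" "bv \<in> carrier_mat q q"
   "M \<in> carrier_mat q q" "Bu \<in> carrier_mat q q" "Bv \<in> carrier_mat q q"
  shows "four_block_mat (1\<^sub>m q - (huv + (bu + huu*bv - huv*bu)*M*Bv)) (huu + (bu + huu*bv - huv*bu)*M*Bu)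
     (-(hvv + (bv + hvu*bv - hvv*bu)*M*Bv)) (1\<^sub>m q + (hvu + (bv + hvu*bv - hvv*bu)*M*Bu))
   = four_block_mat (1\<^sub>m q - huv) huu (-hvv) (1\<^sub>m q + hvu) *
     four_block_mat (1\<^sub>m q - bu*M*Bv) (bu*M*Bu) (-(bv*M*Bv)) (1\<^sub>m q + bv*M*Bu)"
proof -
  interpret R: ring "ring_mat TYPE(complex) q ()" by (rule ring_mat)
  let ?R = "ring_mat TYPE(complex) q ()"
  have cR: "huv \<in> carrier ?R" "huu \<in> carrier ?R" "hvu \<in> carrier ?R" "hvv \<in> carrier ?R" "bu \<in> carrier ?R" "bv \<in> carrier ?R"
   "M \<in> carrier ?R" "Bu \<in> carrier ?R" "Bv \<in> carrier ?R" using c by (simp_all add: ring_mat_simps)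
  note rs = R.r_distr R.l_distr R.m_assoc R.a_ac R.minus_eq R.r_minus R.l_minus R.minus_add R.r_one R.l_one R.minus_minus
  have e11: "(\<one>\<^bsub>?R\<^esub> \<ominus>\<^bsub>?R\<^esub> huv) \<otimes>\<^bsub>?R\<^esub> (\<one>\<^bsub>?R\<^esub> \<ominus>\<^bsub>?R\<^esub> bu \<otimes>\<^bsub>?R\<^esub> M \<otimes>\<^bsub>?R\<^esub> Bv) \<oplus>\<^bsub>?R\<^esub> huu \<otimes>\<^bsub>?R\<^esub> (\<ominus>\<^bsub>?R\<^esub> (bv \<otimes>\<^bsub>?R\<^esub> M \<otimes>\<^bsub>?R\<^esub> Bv)) =
     \<one>\<^bsub>?R\<^esub> \<ominus>\<^bsub>?R\<^esub> (huv \<oplus>\<^bsub>?R\<^esub> (bu \<oplus>\<^bsub>?R\<^esub> huu \<otimes>\<^bsub>?R\<^esub> bv \<ominus>\<^bsub>?R\<^esub> huv \<otimes>\<^bsub>?R\<^esub> bu) \<otimes>\<^bsub>?R\<^esub> M \<otimes>\<^bsub>?R\<^esub> Bv)"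
    using cR by (simp add: rs)
  have e12: "(\<one>\<^bsub>?R\<^esub> \<ominus>\<^bsub>?R\<^esub> huv) \<otimes>\<^bsub>?R\<^esub> (bu \<otimes>\<^bsub>?R\<^esub> M \<otimes>\<^bsub>?R\<^esub> Bu) \<oplus>\<^bsub>?R\<^esub> huu \<otimes>\<^bsub>?R\<^esub> (\<one>\<^bsub>?R\<^esub> \<oplus>\<^bsub>?R\<^esub> bv \<otimes>\<^bsub>?R\<^esub> M \<otimes>\<^bsub>?R\<^esub> Bu) =
     huu \<oplus>\<^bsub>?R\<^esub> (bu \<oplus>\<^bsub>?R\<^esub> huu \<otimes>\<^bsub>?R\<^esub> bv \<ominus>\<^bsub>?R\<^esub> huv \<otimes>\<^bsub>?R\<^esub> bu) \<otimes>\<^bsub>?R\<^esub> M \<otimes>\<^bsub>?R\<^esub> Bu"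
    using cR by (simp add: rs)
  have e21: "(\<ominus>\<^bsub>?R\<^esub> hvv) \<otimes>\<^bsub>?R\<^esub> (\<one>\<^bsub>?R\<^esub> \<ominus>\<^bsub>?R\<^esub> bu \<otimes>\<^bsub>?R\<^esub> M \<otimes>\<^bsub>?R\<^esub> Bv) \<oplus>\<^bsub>?R\<^esub> (\<one>\<^bsub>?R\<^esub> \<oplus>\<^bsub>?R\<^esub> hvu) \<otimes>\<^bsub>?R\<^esub> (\<ominus>\<^bsub>?R\<^esub> (bv \<otimes>\<^bsub>?R\<^esub> M \<otimes>\<^bsub>?R\<^esub> Bv)) =
     \<ominus>\<^bsub>?R\<^esub> (hvv \<oplus>\<^bsub>?R\<^esub> (bv \<oplus>\<^bsub>?R\<^esub> hvu \<otimes>\<^bsub>?R\<^esub> bv \<ominus>\<^bsub>?R\<^esub> hvv \<otimes>\<^bsub>?R\<^esub> bu) \<otimes>\<^bsub>?R\<^esub> M \<otimes>\<^bsub>?R\<^esub> Bv)"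
    using cR by (simp add: rs)
  have e22: "(\<ominus>\<^bsub>?R\<^esub> hvv) \<otimes>\<^bsub>?R\<^esub> (bu \<otimes>\<^bsub>?R\<^esub> M \<otimes>\<^bsub>?R\<^esub> Bu) \<oplus>\<^bsub>?R\<^esub> (\<one>\<^bsub>?R\<^esub> \<oplus>\<^bsub>?R\<^esub> hvu) \<otimes>\<^bsub>?R\<^esub> (\<one>\<^bsub>?R\<^esub> \<oplus>\<^bsub>?R\<^esub> bv \<otimes>\<^bsub>?R\<^esub> M \<otimes>\<^bsub>?R\<^esub> Bu) =
     \<one>\<^bsub>?R\<^esub> \<oplus>\<^bsub>?R\<^esub> (hvu \<oplus>\<^bsub>?R\<^esub> (bv \<oplus>\<^bsub>?R\<^esub> hvu \<otimes>\<^bsub>?R\<^esub> bv \<ominus>\<^bsub>?R\<^esub> hvv \<otimes>\<^bsub>?R\<^esub> bu) \<otimes>\<^bsub>?R\<^esub> M \<otimes>\<^bsub>?R\<^esub> Bu)"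
    using cR by (simp add: rs)
  have m11: "(1\<^sub>m q - huv) * (1\<^sub>m q - bu*M*Bv) + huu * (-(bv*M*Bv)) = 1\<^sub>m q - (huv + (bu + huu*bv - huv*bu)*M*Bv)"
    using e11 c by (simp add: ring_mat_minus ring_mat_simps square_carrier_closed)
  have m12: "(1\<^sub>m q - huv) * (bu*M*Bu) + huu * (1\<^sub>m q + bv*M*Bu) = huu + (bu + huu*bv - huv*bu)*M*Bu"
    using e12 c by (simp add: ring_mat_minus ring_mat_simps square_carrier_closed)
  have m21: "(- hvv) * (1\<^sub>m q - bu*M*Bv) + (1\<^sub>m q + hvu) * (-(bv*M*Bv)) = -(hvv + (bv + hvu*bv - hvv*bu)*M*Bv)"
    using e21 c by (simp add: ring_mat_minus ring_mat_simps square_carrier_closed)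
  have m22: "(- hvv) * (bu*M*Bu) + (1\<^sub>m q + hvu) * (1\<^sub>m q + bv*M*Bu) = 1\<^sub>m q + (hvu + (bv + hvu*bv - hvv*bu)*M*Bu)"
    using e22 c by (simp add: ring_mat_minus ring_mat_simps square_carrier_closed)
  have cc: "1\<^sub>m q - huv \<in> carrier_mat q q" "huu \<in> carrier_mat q q" "-hvv \<in> carrier_mat q q" "1\<^sub>m q + hvu \<in> carrier_mat q q"
    "1\<^sub>m q - bu*M*Bv \<in> carrier_mat q q" "bu*M*Bu \<in> carrier_mat q q" "-(bv*M*Bv) \<in> carrier_mat q q" "1\<^sub>m q + bv*M*Bu \<in> carrier_mat q q"
    using c by (auto intro!: square_carrier_closed)
  show ?thesis unfolding mult_four_block_mat[OF cc] m11 m12 m21 m22 ..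
qed

lemma four_block_shear_mult: fixes S P11 P12 P21 P22 :: "complex mat"
  assumes c: "S \<in> carrier_mat q q" "P11 \<in> carrier_mat q q" "P12 \<in> carrier_mat q q" "P21 \<in> carrier_mat q q" "P22 \<in> carrier_mat q q"
  shows "four_block_mat (1\<^sub>m q - (P11 + S * P21)) (S + (P12 + S * P22)) (- P21) (1\<^sub>m q + P22) =
    four_block_mat (1\<^sub>m q) S (0\<^sub>m q q) (1\<^sub>m q) * four_block_mat (1\<^sub>m q - P11) P12 (- P21) (1\<^sub>m q + P22)"
proof -
  interpret R: ring "ring_mat TYPE(complex) q ()" by (rule ring_mat)
  let ?R = "ring_mat TYPE(complex) q ()"
  have cR: "S \<in> carrier ?R" "P11 \<in> carrier ?R" "P12 \<in> carrier ?R" "P21 \<in> carrier ?R" "P22 \<in> carrier ?R"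
    using c by (simp_all add: ring_mat_simps)
  note rs = R.r_distr R.l_distr R.m_assoc R.a_ac R.minus_eq R.r_minus R.l_minus R.minus_add R.r_one R.l_one R.minus_minus
    R.l_null R.r_null R.l_zero R.r_zero
  have e11: "\<one>\<^bsub>?R\<^esub> \<otimes>\<^bsub>?R\<^esub> (\<one>\<^bsub>?R\<^esub> \<ominus>\<^bsub>?R\<^esub> P11) \<oplus>\<^bsub>?R\<^esub> S \<otimes>\<^bsub>?R\<^esub> (\<ominus>\<^bsub>?R\<^esub> P21) = \<one>\<^bsub>?R\<^esub> \<ominus>\<^bsub>?R\<^esub> (P11 \<oplus>\<^bsub>?R\<^esub> S \<otimes>\<^bsub>?R\<^esub> P21)"
    using cR by (simp add: rs)
  have e12: "\<one>\<^bsub>?R\<^esub> \<otimes>\<^bsub>?R\<^esub> P12 \<oplus>\<^bsub>?R\<^esub> S \<otimes>\<^bsub>?R\<^esub> (\<one>\<^bsub>?R\<^esub> \<oplus>\<^bsub>?R\<^esub> P22) = S \<oplus>\<^bsub>?R\<^esub> (P12 \<oplus>\<^bsub>?R\<^esub> S \<otimes>\<^bsub>?R\<^esub> P22)"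
    using cR by (simp add: rs)
  have e21: "\<zero>\<^bsub>?R\<^esub> \<otimes>\<^bsub>?R\<^esub> (\<one>\<^bsub>?R\<^esub> \<ominus>\<^bsub>?R\<^esub> P11) \<oplus>\<^bsub>?R\<^esub> \<one>\<^bsub>?R\<^esub> \<otimes>\<^bsub>?R\<^esub> (\<ominus>\<^bsub>?R\<^esub> P21) = \<ominus>\<^bsub>?R\<^esub> P21"
    using cR by (simp add: rs)
  have e22: "\<zero>\<^bsub>?R\<^esub> \<otimes>\<^bsub>?R\<^esub> P12 \<oplus>\<^bsub>?R\<^esub> \<one>\<^bsub>?R\<^esub> \<otimes>\<^bsub>?R\<^esub> (\<one>\<^bsub>?R\<^esub> \<oplus>\<^bsub>?R\<^esub> P22) = \<one>\<^bsub>?R\<^esub> \<oplus>\<^bsub>?R\<^esub> P22"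
    using cR by (simp add: rs)
  have m11: "1\<^sub>m q * (1\<^sub>m q - P11) + S * (- P21) = 1\<^sub>m q - (P11 + S * P21)"
    using e11 c by (simp add: ring_mat_minus ring_mat_simps square_carrier_closed)
  have m12: "1\<^sub>m q * P12 + S * (1\<^sub>m q + P22) = S + (P12 + S * P22)"
    using e12 c by (simp add: ring_mat_minus ring_mat_simps square_carrier_closed)
  have m21: "0\<^sub>m q q * (1\<^sub>m q - P11) + 1\<^sub>m q * (- P21) = - P21"
    using e21 c by (simp add: ring_mat_minus ring_mat_simps square_carrier_closed)
  have m22: "0\<^sub>m q q * P12 + 1\<^sub>m q * (1\<^sub>m q + P22) = 1\<^sub>m q + P22"
    using e22 c by (simp add: ring_mat_minus ring_mat_simps square_carrier_closed)
  have cc: "1\<^sub>m q \<in> carrier_mat q q" "S \<in> carrier_mat q q" "0\<^sub>m q q \<in> carrier_mat q q" "1\<^sub>m q \<in> carrier_mat q q"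
    "1\<^sub>m q - P11 \<in> carrier_mat q q" "P12 \<in> carrier_mat q q" "- P21 \<in> carrier_mat q q" "1\<^sub>m q + P22 \<in> carrier_mat q q"
    using c by auto
  show ?thesis unfolding mult_four_block_mat[OF cc] m11 m12 m21 m22 ..
qed

lemma four_block_uminus_eq_bp_factor: assumes "X \<in> carrier_mat q q" "P \<in> carrier_mat q q" "Hi \<in> carrier_mat q q"
  shows "four_block_mat (1\<^sub>m q + za \<cdot>\<^sub>m (adj_m (- X) * Hi * P)) (za \<cdot>\<^sub>m (adj_m (- X) * Hi * (- X)))
     (- (za \<cdot>\<^sub>m (adj_m P * Hi * P))) (1\<^sub>m q - za \<cdot>\<^sub>m (adj_m P * Hi * (- X))) = bp_factor q za X P Hi"
proof -
  have c: "za \<cdot>\<^sub>m (adj_m X * Hi * P) \<in> carrier_mat q q" "za \<cdot>\<^sub>m (adj_m P * Hi * X) \<in> carrier_mat q q"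
    using assms by auto
  have f1: "adj_m (- X) * Hi * P = - (adj_m X * Hi * P)" using assms by (simp add: adj_m_uminus)
  have f2: "adj_m (- X) * Hi * (- X) = adj_m X * Hi * X" using assms by (simp add: adj_m_uminus)
  have f3: "adj_m P * Hi * (- X) = - (adj_m P * Hi * X)" using assms by (simp add: adj_m_uminus)
  show ?thesis unfolding bp_factor_def f1 f2 f3
      smult_uminus_mat one_plus_uminus[OF c(1)] one_minus_uminus[OF c(2)] ..
qed

lemma resolvent_matrix_size_one: assumes "X \<in> carrier_mat q q" "Hi \<in> carrier_mat q q"
  shows "resolvent_matrix q za X (1\<^sub>m q) (adj_m (1\<^sub>m q)) Hi (1\<^sub>m q) = bp_factor q za X (1\<^sub>m q) Hi"
  unfolding resolvent_matrix_def bp_factor_def using assms by simp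

section \<open>One Schur complement step\<close>

text \<open>\<open>F\<close> and \<open>e\<close> embed the first \<open>N'\<close> and the last \<open>q\<close> coordinates; \<open>K'\<close> is the leading section of
  \<open>K\<close>, \<open>Y\<close> and \<open>k\<close> its last block column, \<open>Kh\<close> the Schur complement and \<open>W\<close> the row
  \<open>(-Y\<^sup>* K'\<^sup>-\<^sup>1, I)\<close>. \<open>Ra\<close>, \<open>Rz\<close> are the resolvents \<open>(I - a T)\<^sup>-\<^sup>1\<close>, \<open>(I - cnj z T)\<^sup>-\<^sup>1\<close> and \<open>Ra'\<close>, \<open>Rz'\<close> their
  counterparts for \<open>T'\<close>; only the one-sided inverse laws that are used are assumed.\<close>

locale schur_step =
  fixes N N' q :: nat and K T T' F e u v Ra Rz Ra' Rz' K' Y k W Kh :: "complex mat"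
    and a :: real and z :: complex
  assumes K: "K \<in> carrier_mat N N" and T: "T \<in> carrier_mat N N" and T': "T' \<in> carrier_mat N' N'"
    and F: "F \<in> carrier_mat N N'" and e: "e \<in> carrier_mat N q"
    and u: "u \<in> carrier_mat N q" and v: "v \<in> carrier_mat N q"
    and Ra: "Ra \<in> carrier_mat N N" and Rz: "Rz \<in> carrier_mat N N"
    and Ra': "Ra' \<in> carrier_mat N' N'" and Rz': "Rz' \<in> carrier_mat N' N'"
    and K_hermitian: "adj_m K = K" and det_K: "det K \<noteq> 0"
    and K'_eq: "K' = adj_m F * K * F" and Y_eq: "Y = adj_m F * K * e" and k_eq: "k = adj_m e * K * e"
    and det_K': "det K' \<noteq> 0"
    and W_eq: "W = - (adj_m Y * minv K') * adj_m F + adj_m e"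
    and Kh_eq: "Kh = k - adj_m Y * minv K' * Y"
    and F_isometry: "adj_m F * F = 1\<^sub>m N'" and e_isometry: "adj_m e * e = 1\<^sub>m q"
    and F_e_orthogonal: "adj_m F * e = 0\<^sub>m N' q"
    and F_e_complete: "F * adj_m F + e * adj_m e = 1\<^sub>m N"
    and T_e: "T * e = 0\<^sub>m N q"
    and F_T_intertwine: "adj_m F * T = T' * adj_m F"
    and lyapunov: "T * K - K * adj_m T = v * adj_m u - u * adj_m v"
    and Ra_left_inverse: "Ra * (1\<^sub>m N - complex_of_real a \<cdot>\<^sub>m T) = 1\<^sub>m N"
    and Ra_right_inverse: "(1\<^sub>m N - complex_of_real a \<cdot>\<^sub>m T) * Ra = 1\<^sub>m N"
    and Rz_right_inverse: "(1\<^sub>m N - cnj z \<cdot>\<^sub>m T) * Rz = 1\<^sub>m N"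
    and Ra'_left_inverse: "Ra' * (1\<^sub>m N' - complex_of_real a \<cdot>\<^sub>m T') = 1\<^sub>m N'"
    and Rz'_left_inverse: "Rz' * (1\<^sub>m N' - cnj z \<cdot>\<^sub>m T') = 1\<^sub>m N'"
begin

lemma K'_carrier: "K' \<in> carrier_mat N' N'" unfolding K'_eq using F K by auto
lemma Y_carrier: "Y \<in> carrier_mat N' q" unfolding Y_eq using F K e by auto
lemma k_carrier: "k \<in> carrier_mat q q" unfolding k_eq using K e by auto
lemma minv_K': "minv K' \<in> carrier_mat N' N'" "K' * minv K' = 1\<^sub>m N'" "minv K' * K' = 1\<^sub>m N'"
  using minv_inverse[OF K'_carrier det_K'] by auto
lemma W_carrier: "W \<in> carrier_mat q N" unfolding W_eq using Y_carrier minv_K' F e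
  by (auto intro!: add_carrier_mat uminus_carrier_mat)
lemma Kh_carrier: "Kh \<in> carrier_mat q q" unfolding Kh_eq using k_carrier Y_carrier minv_K' by (auto intro!: minus_carrier_mat)

lemmas carriers = K T T' F e u v Ra Rz Ra' Rz' K'_carrier Y_carrier k_carrier minv_K'(1) W_carrier Kh_carrier

lemma minv_K: "minv K \<in> carrier_mat N N" "K * minv K = 1\<^sub>m N" "minv K * K = 1\<^sub>m N"
  using minv_inverse[OF K det_K] by auto

lemmas dims = carriers[THEN carrier_matD(1)] carriers[THEN carrier_matD(2)]
  minv_K(1)[THEN carrier_matD(1)] minv_K(1)[THEN carrier_matD(2)]

lemma K'_hermitian: "adj_m K' = K'"
  unfolding K'_eq using K_hermitian by (simp add: mat_dim_simps dims)

lemma minv_K'_hermitian: "adj_m (minv K') = minv K'"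
  by (rule minv_hermitian[OF K'_carrier det_K' K'_hermitian])

lemma adj_e_K_F: "adj_m e * K * F = adj_m Y"
  unfolding Y_eq using K_hermitian by (simp add: mat_dim_simps dims)

lemma adj_F_K: "adj_m F * K = K' * adj_m F + Y * adj_m e"
proof -
  have "adj_m F * K = adj_m F * K * (F * adj_m F + e * adj_m e)" using F_e_complete by (simp add: dims)
  also have "\<dots> = adj_m F * K * F * adj_m F + adj_m F * K * e * adj_m e"
    by (simp add: mat_dim_simps dims)
  also have "\<dots> = K' * adj_m F + Y * adj_m e" unfolding K'_eq Y_eq by (simp add: mat_dim_simps dims)
  finally show ?thesis .
qed

lemma adj_e_K: "adj_m e * K = adj_m Y * adj_m F + k * adj_m e"
proof -
  have "adj_m e * K = adj_m e * K * (F * adj_m F + e * adj_m e)" using F_e_complete by (simp add: dims)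
  also have "\<dots> = adj_m e * K * F * adj_m F + adj_m e * K * e * adj_m e"
    by (simp add: mat_dim_simps dims)
  also have "\<dots> = adj_m Y * adj_m F + k * adj_m e" unfolding k_eq adj_e_K_F[symmetric] by (simp add: mat_dim_simps dims)
  finally show ?thesis .
qed

lemma K_F: "K * F = F * K' + e * adj_m Y"
proof -
  have "adj_m (adj_m F * K) = adj_m (K' * adj_m F + Y * adj_m e)" using adj_F_K by simp
  then show ?thesis using K_hermitian K'_hermitian by (simp add: mat_dim_simps dims)
qed

lemma W_K: "W * K = Kh * adj_m e"
proof -
  have "W * K = - (adj_m Y * minv K' * (adj_m F * K)) + adj_m e * K"
    unfolding W_eq by (simp add: mat_dim_simps dims)
  also have "\<dots> = - (adj_m Y * (minv K' * K') * adj_m F) - adj_m Y * minv K' * Y * adj_m e + (adj_m Y * adj_m F + k * adj_m e)"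
    unfolding adj_F_K adj_e_K apply (simp add: mat_dim_simps dims) by (rule eq_matI, auto simp: dims)
  also have "\<dots> = - (adj_m Y * adj_m F) - adj_m Y * minv K' * Y * adj_m e + (adj_m Y * adj_m F + k * adj_m e)"
    using minv_K' by (simp add: dims)
  also have "\<dots> = k * adj_m e - adj_m Y * minv K' * Y * adj_m e"
    by (rule eq_matI, auto simp: dims)
  also have "\<dots> = Kh * adj_m e" unfolding Kh_eq by (simp add: mat_dim_simps dims)
  finally show ?thesis .
qed

lemma W_e: "W * e = 1\<^sub>m q"
proof -
  have "W * e = - (adj_m Y * minv K' * (adj_m F * e)) + adj_m e * e"
    unfolding W_eq by (simp add: mat_dim_simps dims)
  also have "\<dots> = 1\<^sub>m q" unfolding F_e_orthogonal e_isometry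
    by (rule eq_matI, auto simp: dims scalar_prod_def)
  finally show ?thesis .
qed

lemma det_Kh: "det Kh \<noteq> 0"
proof -
  have "Kh * (adj_m e * minv K * e) = W * K * minv K * e" unfolding W_K by (simp add: mat_dim_simps dims)
  also have "\<dots> = W * e" using minv_K by (simp add: mat_dim_simps dims)
  finally have "Kh * (adj_m e * minv K * e) = 1\<^sub>m q" unfolding W_e .
  moreover have "adj_m e * minv K * e \<in> carrier_mat q q" using carriers minv_K by (meson adj_m_carrier mult_carrier_mat)
  ultimately show ?thesis by (intro det_nonzero_of_right_inverse[OF Kh_carrier])
qed

lemma minv_Kh: "minv Kh \<in> carrier_mat q q" "Kh * minv Kh = 1\<^sub>m q" "minv Kh * Kh = 1\<^sub>m q"
  using minv_inverse[OF Kh_carrier det_Kh] by auto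

lemmas dims' = dims minv_Kh(1)[THEN carrier_matD(1)] minv_Kh(1)[THEN carrier_matD(2)]

lemma Kh_hermitian: "adj_m Kh = Kh"
  unfolding Kh_eq k_eq using K_hermitian minv_K'_hermitian by (simp add: mat_dim_simps dims)

lemma minv_K_eq: "minv K = F * minv K' * adj_m F + adj_m W * minv Kh * W"
proof (rule minv_eqI[OF K])
  show "F * minv K' * adj_m F + adj_m W * minv Kh * W \<in> carrier_mat N N"
    using carriers minv_Kh by (auto intro!: mult_carrier_mat add_carrier_mat)
  have KW: "K * adj_m W = e * Kh"
  proof -
    have "K * adj_m W = adj_m (W * K)" using K_hermitian by (simp add: mat_dim_simps dims)
    also have "\<dots> = e * Kh" unfolding W_K using Kh_hermitian by (simp add: mat_dim_simps dims)
    finally show ?thesis .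
  qed
  have "K * (F * minv K' * adj_m F + adj_m W * minv Kh * W) = K * F * minv K' * adj_m F + K * adj_m W * minv Kh * W"
    by (simp add: mat_dim_simps dims')
  also have "\<dots> = F * (K' * minv K') * adj_m F + e * adj_m Y * minv K' * adj_m F + e * (Kh * minv Kh) * W"
    unfolding K_F KW by (simp add: mat_dim_simps dims')
  also have "\<dots> = F * adj_m F + e * adj_m Y * minv K' * adj_m F + e * W"
    using minv_K' minv_Kh by (simp add: dims')
  also have "\<dots> = F * adj_m F + e * (adj_m Y * minv K' * adj_m F) + (- (e * (adj_m Y * minv K' * adj_m F)) + e * adj_m e)"
    unfolding W_eq by (simp add: mat_dim_simps dims')
  also have "\<dots> = F * adj_m F + e * adj_m e"
    by (rule eq_matI, auto simp: dims')
  finally show "K * (F * minv K' * adj_m F + adj_m W * minv Kh * W) = 1\<^sub>m N" unfolding F_e_complete .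
qed

lemma T_e_mult: "T * (e * X) = 0\<^sub>m N (dim_col X)" if "dim_row X = q" for X
proof -
  have "T * (e * X) = (T * e) * X" using that by (simp add: mat_dim_simps dims)
  then show ?thesis unfolding T_e using that by (simp add: zero_mult_mat_dim)
qed

lemma T_F_adj_F: "T * (F * (adj_m F * X)) = T * X" if "dim_row X = N" for X
proof -
  have "T * X = T * ((F * adj_m F + e * adj_m e) * X)" unfolding F_e_complete using that by simp
  also have "\<dots> = T * (F * (adj_m F * X)) + T * (e * (adj_m e * X))"
    using that by (simp add: mat_dim_simps dims)
  also have "\<dots> = T * (F * (adj_m F * X)) + 0\<^sub>m N (dim_col X)"
    using that by (subst T_e_mult, auto simp: dims)
  also have "\<dots> = T * (F * (adj_m F * X))"
    using that by (intro eq_matI, auto simp: dims)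
  finally show ?thesis by simp
qed

lemma adj_Ra_expand: "adj_m Ra = 1\<^sub>m N + complex_of_real a \<cdot>\<^sub>m (adj_m T * adj_m Ra)"
proof -
  have "adj_m (Ra * (1\<^sub>m N - complex_of_real a \<cdot>\<^sub>m T)) = 1\<^sub>m N" unfolding Ra_left_inverse by simp
  then have "adj_m Ra - complex_of_real a \<cdot>\<^sub>m (adj_m T * adj_m Ra) = 1\<^sub>m N"
    by (simp add: mat_dim_simps dims)
  then show ?thesis
    by (rule minus_eq_imp_eq_add[of _ _ _ N N]) (use carriers in \<open>auto intro!: mult_carrier_mat\<close>)
qed

lemma Ra_minus_smult: "Ra - complex_of_real a \<cdot>\<^sub>m (Ra * T) = 1\<^sub>m N"
  using Ra_left_inverse by (simp add: mat_dim_simps dims)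

lemma W_K_adj_T: "W * (K * (adj_m T * X)) = 0\<^sub>m q (dim_col X)" if "dim_row X = N" for X
proof -
  have "W * (K * (adj_m T * X)) = (W * K) * adj_m T * X" using that by (simp add: mat_dim_simps dims)
  also have "\<dots> = Kh * adj_m (T * e) * X" unfolding W_K using that by (simp add: mat_dim_simps dims)
  also have "\<dots> = 0\<^sub>m q (dim_col X)" unfolding T_e using that by (simp add: zero_mult_mat_dim mult_zero_mat_dim dims')
  finally show ?thesis .
qed

definition "C = W * Ra * v * adj_m u - W * Ra * u * adj_m v"

text \<open>Since \<open>W K = Kh e\<^sup>*\<close> and \<open>T e = 0\<close>, the Lyapunov identity collapses \<open>W R(a) T F\<close> to a rank-two
  expression in \<open>u\<close> and \<open>v\<close>.\<close>

lemma W_Ra_T_F: "W * Ra * T * F = C * adj_m Ra * F * minv K'"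
proof -
  define Z where "Z = K * (adj_m T * (adj_m Ra * F))"
  have Zc: "Z \<in> carrier_mat N N'" unfolding Z_def using carriers by (auto intro!: mult_carrier_mat)
  have expand_adj_Ra: "W * (Ra * (T * (K * (adj_m Ra * F)))) =
      W * (Ra * (T * (K * F))) + complex_of_real a \<cdot>\<^sub>m (W * (Ra * (T * Z)))"
    apply (subst adj_Ra_expand) unfolding Z_def by (simp add: mat_dim_simps dims)
  have W_Ra_Z: "W * (Ra * Z) - complex_of_real a \<cdot>\<^sub>m (W * (Ra * (T * Z))) = W * Z"
  proof -
    have "W * Z = W * ((Ra - complex_of_real a \<cdot>\<^sub>m (Ra * T)) * Z)" unfolding Ra_minus_smult using Zc by simp
    also have "\<dots> = W * (Ra * Z) - complex_of_real a \<cdot>\<^sub>m (W * (Ra * (T * Z)))"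
      using Zc by (simp add: mat_dim_simps dims)
    finally show ?thesis by simp
  qed
  have W_Z: "W * Z = 0\<^sub>m q N'" unfolding Z_def by (subst W_K_adj_T, auto simp: dims)
  have "C * adj_m Ra * F = W * Ra * (T * K - K * adj_m T) * adj_m Ra * F"
    unfolding lyapunov C_def by (simp add: mat_dim_simps dims)
  also have "\<dots> = W * (Ra * (T * (K * (adj_m Ra * F)))) - W * (Ra * Z)"
    unfolding Z_def by (simp add: mat_dim_simps dims)
  also have "\<dots> = W * (Ra * (T * (K * F)))"
    unfolding expand_adj_Ra by (rule add_minus_cancel_mat[of _ _ q N']) (use W_Ra_Z W_Z Zc carriers in \<open>auto intro!: mult_carrier_mat\<close>)
  also have "\<dots> = W * Ra * T * F * K'"
    unfolding K'_eq by (simp add: mat_dim_simps dims T_F_adj_F)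
  finally have eq: "C * adj_m Ra * F = W * Ra * T * F * K'" .
  have "W * Ra * T * F = W * Ra * T * F * (K' * minv K')" using minv_K' by (simp add: dims)
  also have "\<dots> = C * adj_m Ra * F * minv K'" unfolding eq using minv_K' by (simp add: mat_dim_simps dims)
  finally show ?thesis .
qed

lemma resolvent_identity: "Rz - Ra = (cnj z - complex_of_real a) \<cdot>\<^sub>m (Ra * (T * Rz))"
proof (rule difference_of_smult_shifts[of "Ra * Rz" "cnj z" _ _ _ _ N N])
  have "Ra = Ra * ((1\<^sub>m N - cnj z \<cdot>\<^sub>m T) * Rz)" unfolding Rz_right_inverse by (simp add: dims)
  also have "\<dots> = Ra * Rz - cnj z \<cdot>\<^sub>m (Ra * (T * Rz))" by (simp add: mat_dim_simps dims)
  finally show "Ra * Rz - cnj z \<cdot>\<^sub>m (Ra * (T * Rz)) = Ra" by simp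
  have "Rz = (Ra * (1\<^sub>m N - complex_of_real a \<cdot>\<^sub>m T)) * Rz" unfolding Ra_left_inverse by (simp add: dims)
  also have "\<dots> = Ra * Rz - complex_of_real a \<cdot>\<^sub>m (Ra * (T * Rz))" by (simp add: mat_dim_simps dims)
  finally show "Ra * Rz - complex_of_real a \<cdot>\<^sub>m (Ra * (T * Rz)) = Rz" by simp
qed (use carriers in \<open>auto intro!: mult_carrier_mat\<close>)

lemma W_Rz_mult: assumes x: "x \<in> carrier_mat N q"
  shows "W * Rz * x = (cnj z - complex_of_real a) \<cdot>\<^sub>m (C * adj_m Ra * F * minv K' * adj_m F * Rz * x) + W * Ra * x"
proof (rule minus_eq_imp_eq_add[of _ _ _ q q])
  have "W * Rz * x - W * Ra * x = W * ((Rz - Ra) * x)" using x by (simp add: mat_dim_simps dims)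
  also have "\<dots> = (cnj z - complex_of_real a) \<cdot>\<^sub>m (W * (Ra * (T * (Rz * x))))"
    unfolding resolvent_identity using x by (simp add: mat_dim_simps dims)
  also have "W * (Ra * (T * (Rz * x))) = W * (Ra * (T * (F * (adj_m F * (Rz * x)))))"
    using x by (simp add: T_F_adj_F dims)
  also have "\<dots> = (W * Ra * T * F) * adj_m F * Rz * x" using x by (simp add: mat_dim_simps dims)
  also have "\<dots> = C * adj_m Ra * F * minv K' * adj_m F * Rz * x" unfolding W_Ra_T_F ..
  finally show "W * Rz * x - W * Ra * x = (cnj z - complex_of_real a) \<cdot>\<^sub>m (C * adj_m Ra * F * minv K' * adj_m F * Rz * x)" .
qed (use carriers x in \<open>auto intro!: mult_carrier_mat\<close>)

definition "reduced_kernel x y = adj_m x * adj_m Rz * F * minv K' * adj_m F * Ra * y"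

lemma adj_W_Rz_mult: assumes x: "x \<in> carrier_mat N q"
  shows "adj_m (W * Rz * x) = (z - complex_of_real a) \<cdot>\<^sub>m (reduced_kernel x u * adj_m (W * Ra * v) - reduced_kernel x v * adj_m (W * Ra * u))
     + adj_m (W * Ra * x)"
proof -
  have "adj_m (W * Rz * x) = adj_m ((cnj z - complex_of_real a) \<cdot>\<^sub>m (C * adj_m Ra * F * minv K' * adj_m F * Rz * x) + W * Ra * x)"
    using W_Rz_mult[OF x] by simp
  also have "\<dots> = (z - complex_of_real a) \<cdot>\<^sub>m (reduced_kernel x u * adj_m (W * Ra * v) - reduced_kernel x v * adj_m (W * Ra * u))
     + adj_m (W * Ra * x)"
    unfolding reduced_kernel_def C_def using x minv_K'_hermitian by (simp add: mat_dim_simps dims)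
  finally show ?thesis .
qed

lemma adj_F_shift: "adj_m F * (1\<^sub>m N - c \<cdot>\<^sub>m T) = (1\<^sub>m N' - c \<cdot>\<^sub>m T') * adj_m F"
  using F_T_intertwine by (simp add: mat_dim_simps dims)

lemma Ra'_adj_F: "Ra' * adj_m F = adj_m F * Ra"
proof -
  have "Ra' * adj_m F = Ra' * (adj_m F * ((1\<^sub>m N - complex_of_real a \<cdot>\<^sub>m T) * Ra))" unfolding Ra_right_inverse by (simp add: dims)
  also have "\<dots> = Ra' * ((adj_m F * (1\<^sub>m N - complex_of_real a \<cdot>\<^sub>m T)) * Ra)" by (simp add: mat_dim_simps dims)
  also have "\<dots> = (Ra' * (1\<^sub>m N' - complex_of_real a \<cdot>\<^sub>m T')) * adj_m F * Ra" unfolding adj_F_shift by (simp add: mat_dim_simps dims)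
  also have "\<dots> = adj_m F * Ra" unfolding Ra'_left_inverse by (simp add: dims)
  finally show ?thesis .
qed

lemma Rz'_adj_F: "Rz' * adj_m F = adj_m F * Rz"
proof -
  have "Rz' * adj_m F = Rz' * (adj_m F * ((1\<^sub>m N - cnj z \<cdot>\<^sub>m T) * Rz))" unfolding Rz_right_inverse by (simp add: dims)
  also have "\<dots> = Rz' * ((adj_m F * (1\<^sub>m N - cnj z \<cdot>\<^sub>m T)) * Rz)" by (simp add: mat_dim_simps dims)
  also have "\<dots> = (Rz' * (1\<^sub>m N' - cnj z \<cdot>\<^sub>m T')) * adj_m F * Rz" unfolding adj_F_shift by (simp add: mat_dim_simps dims)
  also have "\<dots> = adj_m F * Rz" unfolding Rz'_left_inverse by (simp add: dims)
  finally show ?thesis .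
qed

lemma compressed_kernel: assumes x: "x \<in> carrier_mat N q" and y: "y \<in> carrier_mat N q"
  shows "adj_m (adj_m F * x) * adj_m Rz' * minv K' * Ra' * (adj_m F * y) = reduced_kernel x y"
proof -
  have "adj_m (adj_m F * x) * adj_m Rz' * minv K' * Ra' * (adj_m F * y)
      = adj_m (Rz' * adj_m F * x) * minv K' * (Ra' * adj_m F * y)" using x y by (simp add: mat_dim_simps dims)
  also have "\<dots> = adj_m (adj_m F * Rz * x) * minv K' * (adj_m F * Ra * y)" unfolding Ra'_adj_F Rz'_adj_F ..
  also have "\<dots> = reduced_kernel x y" unfolding reduced_kernel_def using x y by (simp add: mat_dim_simps dims)
  finally show ?thesis .
qed

lemma kernel_split: assumes x: "x \<in> carrier_mat N q" and y: "y \<in> carrier_mat N q"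
  shows "adj_m x * adj_m Rz * minv K * Ra * y = reduced_kernel x y + adj_m (W * Rz * x) * minv Kh * (W * Ra * y)"
  unfolding minv_K_eq reduced_kernel_def using x y by (simp add: mat_dim_simps dims')

lemma reduced_kernel_carrier: "x \<in> carrier_mat N q \<Longrightarrow> y \<in> carrier_mat N q \<Longrightarrow> reduced_kernel x y \<in> carrier_mat q q"
  unfolding reduced_kernel_def using carriers by (auto intro!: mult_carrier_mat)

abbreviation za where "za \<equiv> z - complex_of_real a"

lemma scaled_adj_W_Rz_mult: assumes x: "x \<in> carrier_mat N q"
  shows "za \<cdot>\<^sub>m adj_m (W * Rz * x) = za \<cdot>\<^sub>m adj_m (W * Ra * x) + (za \<cdot>\<^sub>m reduced_kernel x u) * (za \<cdot>\<^sub>m adj_m (W * Ra * v))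
     - (za \<cdot>\<^sub>m reduced_kernel x v) * (za \<cdot>\<^sub>m adj_m (W * Ra * u))"
proof -
  have kernel_carrier: "reduced_kernel x u \<in> carrier_mat q q" "reduced_kernel x v \<in> carrier_mat q q" using reduced_kernel_carrier x u v by auto
  have "za \<cdot>\<^sub>m adj_m (W * Rz * x) = (za \<cdot>\<^sub>m reduced_kernel x u) * (za \<cdot>\<^sub>m adj_m (W * Ra * v))
     - (za \<cdot>\<^sub>m reduced_kernel x v) * (za \<cdot>\<^sub>m adj_m (W * Ra * u)) + za \<cdot>\<^sub>m adj_m (W * Ra * x)"
    unfolding adj_W_Rz_mult[OF x] using kernel_carrier x
    by (simp add: mat_dim_simps smult_add_mat_dim smult_minus_mat_dim dims kernel_carrier[THEN carrier_matD(1)] kernel_carrier[THEN carrier_matD(2)])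
  also have "\<dots> = za \<cdot>\<^sub>m adj_m (W * Ra * x) + (za \<cdot>\<^sub>m reduced_kernel x u) * (za \<cdot>\<^sub>m adj_m (W * Ra * v))
     - (za \<cdot>\<^sub>m reduced_kernel x v) * (za \<cdot>\<^sub>m adj_m (W * Ra * u))"
  proof (rule minus_add_commute_mat[of _ q q])
    have WRa: "W * Ra \<in> carrier_mat q N" using W_carrier Ra by (rule mult_carrier_mat)
    have b: "adj_m (W * Ra * v) \<in> carrier_mat q q" "adj_m (W * Ra * u) \<in> carrier_mat q q" "adj_m (W * Ra * x) \<in> carrier_mat q q"
      using mult_carrier_mat[OF WRa v] mult_carrier_mat[OF WRa u] mult_carrier_mat[OF WRa x] by auto
    show "za \<cdot>\<^sub>m adj_m (W * Ra * x) \<in> carrier_mat q q" using b by simp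
    show "za \<cdot>\<^sub>m reduced_kernel x v * (za \<cdot>\<^sub>m adj_m (W * Ra * u)) \<in> carrier_mat q q"
      using kernel_carrier b by (meson mult_carrier_mat smult_carrier_mat)
    show "za \<cdot>\<^sub>m reduced_kernel x u * (za \<cdot>\<^sub>m adj_m (W * Ra * v)) \<in> carrier_mat q q"
      using kernel_carrier b by (meson mult_carrier_mat smult_carrier_mat)
  qed
  finally show ?thesis .
qed

lemma scaled_kernel_split: assumes x: "x \<in> carrier_mat N q" and y: "y \<in> carrier_mat N q"
  shows "za \<cdot>\<^sub>m (adj_m x * adj_m Rz * minv K * Ra * y) = za \<cdot>\<^sub>m reduced_kernel x y +
     (za \<cdot>\<^sub>m adj_m (W * Ra * x) + (za \<cdot>\<^sub>m reduced_kernel x u) * (za \<cdot>\<^sub>m adj_m (W * Ra * v))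
     - (za \<cdot>\<^sub>m reduced_kernel x v) * (za \<cdot>\<^sub>m adj_m (W * Ra * u))) * minv Kh * (W * Ra * y)"
proof -
  have kernel_carrier: "reduced_kernel x y \<in> carrier_mat q q" using reduced_kernel_carrier x y by auto
  have "za \<cdot>\<^sub>m (adj_m x * adj_m Rz * minv K * Ra * y) = za \<cdot>\<^sub>m reduced_kernel x y + (za \<cdot>\<^sub>m adj_m (W * Rz * x)) * minv Kh * (W * Ra * y)"
    unfolding kernel_split[OF x y] using x y kernel_carrier
    by (simp add: mat_dim_simps smult_add_mat_dim dims' kernel_carrier[THEN carrier_matD(1)] kernel_carrier[THEN carrier_matD(2)])
  then show ?thesis unfolding scaled_adj_W_Rz_mult[OF x] .
qed

lemma scaled_mult_assoc: assumes x: "x \<in> carrier_mat N q" and y: "y \<in> carrier_mat N q"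
  shows "za \<cdot>\<^sub>m (adj_m (W * Ra * x) * minv Kh * (W * Ra * y)) = (za \<cdot>\<^sub>m adj_m (W * Ra * x)) * minv Kh * (W * Ra * y)"
  using x y by (simp add: mat_dim_simps dims')

text \<open>The leading part of \<open>minv_K_eq\<close> gives the resolvent matrix of \<open>K'\<close>, as \<open>F\<^sup>*\<close> intertwines the
  resolvents; by \<open>adj_W_Rz_mult\<close> the Schur complement part supplies exactly the cross terms of
  the product with the Blaschke--Potapov factor.\<close>

lemma resolvent_matrix_factor: "resolvent_matrix q za u v (adj_m Rz) (minv K) Ra =
   resolvent_matrix q za (adj_m F * u) (adj_m F * v) (adj_m Rz') (minv K') Ra' * bp_factor q za (W * Ra * u) (W * Ra * v) (minv Kh)"
proof -
  have c: "za \<cdot>\<^sub>m reduced_kernel u v \<in> carrier_mat q q" "za \<cdot>\<^sub>m reduced_kernel u u \<in> carrier_mat q q"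
    "za \<cdot>\<^sub>m reduced_kernel v u \<in> carrier_mat q q" "za \<cdot>\<^sub>m reduced_kernel v v \<in> carrier_mat q q"
    "za \<cdot>\<^sub>m adj_m (W * Ra * u) \<in> carrier_mat q q" "za \<cdot>\<^sub>m adj_m (W * Ra * v) \<in> carrier_mat q q"
    "minv Kh \<in> carrier_mat q q" "W * Ra * u \<in> carrier_mat q q" "W * Ra * v \<in> carrier_mat q q"
    using reduced_kernel_carrier u v carriers minv_Kh by (auto intro!: mult_carrier_mat)
  show ?thesis
    unfolding resolvent_matrix_def bp_factor_def scaled_kernel_split[OF u v] scaled_kernel_split[OF u u] scaled_kernel_split[OF v v] scaled_kernel_split[OF v u] compressed_kernel[OF u v] compressed_kernel[OF u u] compressed_kernel[OF v v] compressed_kernel[OF v u]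
      scaled_mult_assoc[OF u v] scaled_mult_assoc[OF u u] scaled_mult_assoc[OF v v] scaled_mult_assoc[OF v u]
    by (rule four_block_bp_mult[OF c])
qed

end

lemma blockmat_dims[simp]: "dim_row (blockmat q m p B) = m * q" "dim_col (blockmat q m p B) = p * q"
  by (simp_all add: blockmat_def)

lemma blockmat_carrier[simp]: "blockmat q m p B \<in> carrier_mat (m * q) (p * q)"
  by (rule carrier_matI) simp_all

lemma blockmat_carrier1: "blockmat q m 1 B \<in> carrier_mat (m * q) q"
  by (rule carrier_matI) simp_all

lemma blockmat_index[simp]: "i < m * q \<Longrightarrow> k < p * q \<Longrightarrow>
  blockmat q m p B $$ (i,k) = B (i div q) (k div q) $$ (i mod q, k mod q)"
  by (simp add: blockmat_def)

definition lead_emb :: "nat \<Rightarrow> nat \<Rightarrow> complex mat" where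
  "lead_emb q j = mat ((j+1)*q) (j*q) (\<lambda>(i,k). if i = k then 1 else 0)"
definition last_emb :: "nat \<Rightarrow> nat \<Rightarrow> complex mat" where
  "last_emb q j = mat ((j+1)*q) q (\<lambda>(i,k). if i = j*q + k then 1 else 0)"

lemma lead_emb_carrier: "lead_emb q j \<in> carrier_mat ((j+1)*q) (j*q)" by (simp add: lead_emb_def)
lemma last_emb_carrier: "last_emb q j \<in> carrier_mat ((j+1)*q) q" by (simp add: last_emb_def)

lemma sum_delta_mult: "finite S \<Longrightarrow> (\<Sum>r\<in>S. (if r = i then 1 else 0) * f r) = (if i \<in> S then f i else (0::complex))"
proof -
  assume "finite S"
  have h: "(\<lambda>r. (if r = i then 1 else 0) * f r) = (\<lambda>r. if r = i then f r else 0)" by auto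
  show ?thesis by (subst h) (simp add: \<open>finite S\<close>)
qed

lemma sum_delta_mult2: "finite S \<Longrightarrow> (\<Sum>r\<in>S. f r * (if r = i then 1 else 0)) = (if i \<in> S then f i else (0::complex))"
  using sum_delta_mult[where S=S and i=i and f=f] by (simp add: mult.commute)

lemma sum_delta_mult2': "finite S \<Longrightarrow> (\<Sum>r\<in>S. f r * (if i = r then 1 else 0)) = (if i \<in> S then f i else (0::complex))"
  using sum_delta_mult2[where S=S and i=i and f=f] by (simp add: eq_commute[of i])

lemma cnj_indicator [simp]: "cnj (if P then 1 else 0) = (if P then 1 else 0)"
  by simp

lemma adj_lead_emb_mult: "dim_row A = (j+1)*q \<Longrightarrow> adj_m (lead_emb q j) * A = mat (j*q) (dim_col A) (\<lambda>(i,k). A $$ (i,k))"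
proof (rule eq_matI)
  fix i k assume "dim_row A = (j+1)*q" "i < dim_row (mat (j*q) (dim_col A) (\<lambda>(i,k). A $$ (i,k)))" "k < dim_col (mat (j * q) (dim_col A) (\<lambda>(i, k). A $$ (i, k)))"
  then show "(adj_m (lead_emb q j) * A) $$ (i,k) = mat (j*q) (dim_col A) (\<lambda>(i,k). A $$ (i,k)) $$ (i,k)"
    by (simp add: lead_emb_def scalar_prod_def sum_delta_mult)
qed (auto simp: lead_emb_def)

lemma mult_lead_emb: "dim_col A = (j+1)*q \<Longrightarrow> A * lead_emb q j = mat (dim_row A) (j*q) (\<lambda>(i,k). A $$ (i,k))"
  by (rule eq_matI) (auto simp: lead_emb_def scalar_prod_def sum_delta_mult2)

lemma mult_adj_lead_emb: "dim_col A = j*q \<Longrightarrow> A * adj_m (lead_emb q j) = mat (dim_row A) ((j+1)*q) (\<lambda>(i,k). if k < j*q then A $$ (i,k) else 0)"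
  by (rule eq_matI) (auto simp: lead_emb_def scalar_prod_def sum_delta_mult2 sum_delta_mult2')

lemma adj_last_emb_mult: "dim_row A = (j+1)*q \<Longrightarrow> adj_m (last_emb q j) * A = mat q (dim_col A) (\<lambda>(i,k). A $$ (j*q+i,k))"
  by (rule eq_matI) (auto simp: last_emb_def scalar_prod_def sum_delta_mult)

lemma mult_last_emb: "dim_col A = (j+1)*q \<Longrightarrow> A * last_emb q j = mat (dim_row A) q (\<lambda>(i,k). A $$ (i,j*q+k))"
  by (rule eq_matI) (auto simp: last_emb_def scalar_prod_def sum_delta_mult2)

lemma mult_adj_last_emb: "dim_col A = q \<Longrightarrow> A * adj_m (last_emb q j) = mat (dim_row A) ((j+1)*q) (\<lambda>(i,k). if j*q \<le> k then A $$ (i,k - j*q) else 0)"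
proof (rule eq_matI)
  fix i k assume A: "dim_col A = q" and i: "i < dim_row (mat (dim_row A) ((j+1)*q) (\<lambda>(i,k). if j*q \<le> k then A $$ (i,k - j*q) else 0))"
    and k: "k < dim_col (mat (dim_row A) ((j+1)*q) (\<lambda>(i,k). if j*q \<le> k then A $$ (i,k - j*q) else 0))"
  have eq: "\<And>r. (k = j*q + r) = (j*q \<le> k \<and> r = k - j*q)" by auto
  have "(A * adj_m (last_emb q j)) $$ (i,k) = (\<Sum>r = 0..<q. A $$ (i,r) * (if r = k - j*q \<and> j*q \<le> k then 1 else 0))"
    using A i k by (auto simp: last_emb_def scalar_prod_def eq intro!: sum.cong)
  also have "\<dots> = (if j*q \<le> k then A $$ (i,k - j*q) else 0)"
    using k by (cases "j*q \<le> k") (auto simp: sum_delta_mult2 algebra_simps)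
  finally show "(A * adj_m (last_emb q j)) $$ (i,k) = mat (dim_row A) ((j+1)*q) (\<lambda>(i,k). if j*q \<le> k then A $$ (i,k - j*q) else 0) $$ (i,k)"
    using i k by simp
qed (auto simp: last_emb_def)

lemma divmod_shift: assumes q: "0 < q"
  shows "((i::nat) div q = r div q + 1 \<and> i mod q = r mod q) = (q \<le> i \<and> r = i - q)"
proof
  assume h: "i div q = r div q + 1 \<and> i mod q = r mod q"
  have "i = q * (i div q) + i mod q" using div_mult_mod_eq[of i q] by (simp add: mult.commute)
  also have "\<dots> = q * (r div q) + r mod q + q" using h by (simp add: algebra_simps)
  also have "\<dots> = r + q" by simp
  finally show "q \<le> i \<and> r = i - q" by simp
next
  assume h: "q \<le> i \<and> r = i - q"
  then show "i div q = r div q + 1 \<and> i mod q = r mod q"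
    using le_div_geq[OF q, of i] le_mod_geq[of q i] by auto
qed

lemma Tm_index: assumes q: "0 < q" and i: "i < (j+1)*q" and r: "r < (j+1)*q"
  shows "Tm q j $$ (i,r) = (if q \<le> i \<and> r = i - q then 1 else 0)"
proof -
  have "Tm q j $$ (i,r) = (if i div q = r div q + 1 \<and> i mod q = r mod q then 1 else 0)"
    unfolding Tm_def using i r q by auto
  then show ?thesis unfolding divmod_shift[OF q] .
qed

lemma Tm_dims[simp]: "dim_row (Tm q j) = (j+1)*q" "dim_col (Tm q j) = (j+1)*q" unfolding Tm_def by simp_all
lemma Tm_carrier: "Tm q j \<in> carrier_mat ((j+1)*q) ((j+1)*q)" by (rule carrier_matI) simp_all

lemma Tm_mult: assumes q: "0 < q" and A: "dim_row A = (j+1)*q"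
  shows "Tm q j * A = mat ((j+1)*q) (dim_col A) (\<lambda>(i,k). if q \<le> i then A $$ (i-q,k) else 0)"
proof (rule eq_matI)
  fix i k assume i: "i < dim_row (mat ((j+1)*q) (dim_col A) (\<lambda>(i,k). if q \<le> i then A $$ (i-q,k) else 0))"
    and k: "k < dim_col (mat ((j+1)*q) (dim_col A) (\<lambda>(i,k). if q \<le> i then A $$ (i-q,k) else 0))"
  have "(Tm q j * A) $$ (i,k) = (\<Sum>r = 0..<(j+1)*q. (if r = i - q \<and> q \<le> i then 1 else 0) * A $$ (r,k))"
    using A i k q by (auto simp: scalar_prod_def Tm_index conj_commute intro!: sum.cong)
  also have "\<dots> = (if q \<le> i then A $$ (i-q,k) else 0)"
    using i by (cases "q \<le> i") (auto simp: sum_delta_mult)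
  finally show "(Tm q j * A) $$ (i,k) = mat ((j+1)*q) (dim_col A) (\<lambda>(i,k). if q \<le> i then A $$ (i-q,k) else 0) $$ (i,k)"
    using i k by simp
qed (auto simp: Tm_def)

lemma mult_adj_Tm: assumes q: "0 < q" and A: "dim_col A = (j+1)*q"
  shows "A * adj_m (Tm q j) = mat (dim_row A) ((j+1)*q) (\<lambda>(i,k). if q \<le> k then A $$ (i,k-q) else 0)"
proof (rule eq_matI)
  fix i k assume i: "i < dim_row (mat (dim_row A) ((j+1)*q) (\<lambda>(i,k). if q \<le> k then A $$ (i,k-q) else 0))"
    and k: "k < dim_col (mat (dim_row A) ((j+1)*q) (\<lambda>(i,k). if q \<le> k then A $$ (i,k-q) else 0))"
  have "(A * adj_m (Tm q j)) $$ (i,k) = (\<Sum>r = 0..<(j+1)*q. A $$ (i,r) * (if r = k - q \<and> q \<le> k then 1 else 0))"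
    using A i k q by (auto simp: scalar_prod_def Tm_index Tm_carrier conj_commute intro!: sum.cong)
  also have "\<dots> = (if q \<le> k then A $$ (i,k-q) else 0)"
    using k by (cases "q \<le> k") (auto simp: sum_delta_mult2)
  finally show "(A * adj_m (Tm q j)) $$ (i,k) = mat (dim_row A) ((j+1)*q) (\<lambda>(i,k). if q \<le> k then A $$ (i,k-q) else 0) $$ (i,k)"
    using i k by simp
qed (auto simp: Tm_def)

lemma vm_index: assumes q: "0 < q" and i: "i < (j+1)*q" and c: "c < q"
  shows "vm q j $$ (i,c) = (if i = c then 1 else 0)"
proof -
  have "vm q j $$ (i,c) = (if i div q = 0 then 1\<^sub>m q else 0\<^sub>m q q) $$ (i mod q, c mod q)"
    unfolding vm_def using i c by auto
  then show ?thesis using q c i by (cases "i < q") (auto simp: div_eq_0_iff)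
qed

lemma vm_dims[simp]: "dim_row (vm q j) = (j+1)*q" "dim_col (vm q j) = q" unfolding vm_def by simp_all
lemma vm_carrier: "vm q j \<in> carrier_mat ((j+1)*q) q" by (rule carrier_matI) simp_all

lemma vm_mult: assumes q: "0 < q" and B: "dim_row B = q"
  shows "vm q j * B = mat ((j+1)*q) (dim_col B) (\<lambda>(i,k). if i < q then B $$ (i,k) else 0)"
proof (rule eq_matI)
  fix i k assume i: "i < dim_row (mat ((j+1)*q) (dim_col B) (\<lambda>(i,k). if i < q then B $$ (i,k) else 0))"
    and k: "k < dim_col (mat ((j+1)*q) (dim_col B) (\<lambda>(i,k). if i < q then B $$ (i,k) else 0))"
  have "(vm q j * B) $$ (i,k) = (\<Sum>r = 0..<q. (if r = i then 1 else 0) * B $$ (r,k))"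
    using B i k q vm_carrier[of q j] by (auto simp: scalar_prod_def vm_index eq_commute[of i] intro!: sum.cong)
  also have "\<dots> = (if i < q then B $$ (i,k) else 0)" by (simp add: sum_delta_mult)
  finally show "(vm q j * B) $$ (i,k) = mat ((j+1)*q) (dim_col B) (\<lambda>(i,k). if i < q then B $$ (i,k) else 0) $$ (i,k)"
    using i k by simp
qed (use vm_carrier[of q j] in auto)

lemma mult_adj_vm: assumes q: "0 < q" and A: "dim_col A = q"
  shows "A * adj_m (vm q j) = mat (dim_row A) ((j+1)*q) (\<lambda>(i,k). if k < q then A $$ (i,k) else 0)"
proof (rule eq_matI)
  fix i k assume i: "i < dim_row (mat (dim_row A) ((j+1)*q) (\<lambda>(i,k). if k < q then A $$ (i,k) else 0))"
    and k: "k < dim_col (mat (dim_row A) ((j+1)*q) (\<lambda>(i,k). if k < q then A $$ (i,k) else 0))"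
  have "(A * adj_m (vm q j)) $$ (i,k) = (\<Sum>r = 0..<q. A $$ (i,r) * (if r = k then 1 else 0))"
    using A i k q vm_carrier[of q j] by (auto simp: scalar_prod_def vm_index eq_commute[of k] intro!: sum.cong)
  also have "\<dots> = (if k < q then A $$ (i,k) else 0)" by (simp add: sum_delta_mult2)
  finally show "(A * adj_m (vm q j)) $$ (i,k) = mat (dim_row A) ((j+1)*q) (\<lambda>(i,k). if k < q then A $$ (i,k) else 0) $$ (i,k)"
    using i k by simp
qed (use vm_carrier[of q j] in auto)

lemma div_sub: assumes "0 < q" "q \<le> (i::nat)"
  shows "(i - q) div q = i div q - 1" "(i - q) mod q = i mod q"
  using le_div_geq[OF assms] le_mod_geq[OF assms(2)] by auto

lemma div_lt1: "(i::nat) < q \<Longrightarrow> i div q = 0" "i < q \<Longrightarrow> i mod q = i" by auto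

lemma div_ge1: "0 < q \<Longrightarrow> q \<le> (i::nat) \<Longrightarrow> 1 \<le> i div q"
  by (simp add: div_greater_zero_iff Suc_le_eq)

lemma div_bound: "(i::nat) < (j+1)*q \<Longrightarrow> i div q \<le> j"
  by (metis Suc_eq_plus1 less_Suc_eq_le less_mult_imp_div_less)

lemma embeddings_orthogonal:
  "adj_m (lead_emb q j) * lead_emb q j = 1\<^sub>m (j*q)"
  "adj_m (last_emb q j) * last_emb q j = 1\<^sub>m q"
  "adj_m (lead_emb q j) * last_emb q j = 0\<^sub>m (j*q) q"
  "lead_emb q j * adj_m (lead_emb q j) + last_emb q j * adj_m (last_emb q j) = 1\<^sub>m ((j+1)*q)"
proof -
  show "adj_m (lead_emb q j) * lead_emb q j = 1\<^sub>m (j*q)"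
    by (subst adj_lead_emb_mult) (auto simp: lead_emb_def)
  show "adj_m (last_emb q j) * last_emb q j = 1\<^sub>m q"
    by (subst adj_last_emb_mult) (auto simp: last_emb_def)
  show "adj_m (lead_emb q j) * last_emb q j = 0\<^sub>m (j*q) q"
    by (subst adj_lead_emb_mult) (auto simp: last_emb_def)
  show "lead_emb q j * adj_m (lead_emb q j) + last_emb q j * adj_m (last_emb q j) = 1\<^sub>m ((j+1)*q)"
    by (subst mult_adj_lead_emb, simp add: lead_emb_def, subst mult_adj_last_emb, simp add: last_emb_def, rule eq_matI)
       (auto simp: lead_emb_def last_emb_def)
qed

lemma Tm_mult_last_emb: assumes q: "0 < q" shows "Tm q j * last_emb q j = 0\<^sub>m ((j+1)*q) q"
proof -
  have "Tm q j * last_emb q j = mat ((j+1)*q) q (\<lambda>(i,k). Tm q j $$ (i, j*q+k))"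
    by (subst mult_last_emb) auto
  also have "\<dots> = 0\<^sub>m ((j+1)*q) q"
    by (rule eq_matI) (auto simp: Tm_index[OF q])
  finally show ?thesis .
qed

lemma adj_lead_emb_Tm: assumes q: "0 < q" and j: "1 \<le> j"
  shows "adj_m (lead_emb q j) * Tm q j = Tm q (j-1) * adj_m (lead_emb q j)"
proof -
  have jj: "j - 1 + 1 = j" using j by simp
  have jjq: "q + (j - Suc 0) * q = j * q" using j by (cases j) auto
  have "adj_m (lead_emb q j) * Tm q j = mat (j*q) ((j+1)*q) (\<lambda>(i,k). Tm q j $$ (i,k))"
    by (subst adj_lead_emb_mult) auto
  also have "\<dots> = mat (j*q) ((j+1)*q) (\<lambda>(i,k). if k < j*q then Tm q (j-1) $$ (i,k) else 0)"
  proof (rule eq_matI)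
    fix i k assume "i < dim_row (mat (j*q) ((j+1)*q) (\<lambda>(i,k). if k < j*q then Tm q (j-1) $$ (i,k) else 0))"
      "k < dim_col (mat (j*q) ((j+1)*q) (\<lambda>(i,k). if k < j*q then Tm q (j-1) $$ (i,k) else 0))"
    then have i: "i < j*q" and k: "k < (j+1)*q" by auto
    have i': "i < (j - 1 + 1) * q" using i jj by simp
    show "mat (j*q) ((j+1)*q) (\<lambda>(i,k). Tm q j $$ (i,k)) $$ (i,k) = mat (j*q) ((j+1)*q) (\<lambda>(i,k). if k < j*q then Tm q (j-1) $$ (i,k) else 0) $$ (i,k)"
    proof (cases "k < j*q")
      case True
      then have k': "k < (j - 1 + 1) * q" using jj by simp
      show ?thesis using True i k Tm_index[OF q i' k'] Tm_index[OF q, of i j k] by simp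
    next
      case False
      then show ?thesis using i k Tm_index[OF q, of i j k] by auto
    qed
  qed auto
  also have "\<dots> = Tm q (j-1) * adj_m (lead_emb q j)"
    by (subst mult_adj_lead_emb) (auto simp: jj jjq)
  finally show ?thesis .
qed

lemma adj_lead_emb_vm: assumes q: "0 < q" and j: "1 \<le> j" shows "adj_m (lead_emb q j) * vm q j = vm q (j-1)"
proof -
  have jjq: "q + (j - Suc 0) * q = j * q" using j by (cases j) auto
  show ?thesis
  proof (subst adj_lead_emb_mult, simp, rule eq_matI)
    fix i k assume "i < dim_row (vm q (j - 1))" "k < dim_col (vm q (j - 1))"
    then have i: "i < j*q" and i': "i < (j-1+1)*q" and k: "k < q" using jjq by auto
    show "mat (j * q) (dim_col (vm q j)) (\<lambda>(i, k). vm q j $$ (i, k)) $$ (i, k) = vm q (j - 1) $$ (i, k)"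
      using i k vm_index[OF q i' k] vm_index[OF q, of i j k] by auto
  qed (auto simp: jjq)
qed

lemma prod_list_ones: "(\<forall>x\<in>set xs. f x = 1) \<Longrightarrow> prod_list (map f xs) = (1::complex)"
  by (induct xs) auto

lemma det_one_minus_smult_Tm: assumes q: "0 < q"
  shows "det (1\<^sub>m ((j+1)*q) - w \<cdot>\<^sub>m Tm q j) = 1"
proof -
  let ?A = "1\<^sub>m ((j+1)*q) - w \<cdot>\<^sub>m Tm q j"
  have c: "?A \<in> carrier_mat ((j+1)*q) ((j+1)*q)" using Tm_carrier by auto
  have "det ?A = prod_list (diag_mat ?A)"
  proof (rule det_lower_triangular[OF _ c])
    fix i k assume "i < k" "k < (j+1)*q"
    then show "?A $$ (i,k) = 0" using Tm_index[OF q, of i j k] Tm_carrier[of q j] by auto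
  qed
  also have "\<dots> = 1" unfolding diag_mat_def
    by (rule prod_list_ones) (use q Tm_index[OF q] in auto)
  finally show ?thesis .
qed

lemma Rm_inverse: assumes q: "0 < q"
  shows "Rm q j w \<in> carrier_mat ((j+1)*q) ((j+1)*q)"
    "Rm q j w * (1\<^sub>m ((j+1)*q) - w \<cdot>\<^sub>m Tm q j) = 1\<^sub>m ((j+1)*q)"
    "(1\<^sub>m ((j+1)*q) - w \<cdot>\<^sub>m Tm q j) * Rm q j w = 1\<^sub>m ((j+1)*q)"
proof -
  have c: "1\<^sub>m ((j+1)*q) - w \<cdot>\<^sub>m Tm q j \<in> carrier_mat ((j+1)*q) ((j+1)*q)" using Tm_carrier by auto
  note m = minv_inverse[OF c, unfolded det_one_minus_smult_Tm[OF q]]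
  show "Rm q j w \<in> carrier_mat ((j+1)*q) ((j+1)*q)"
    "Rm q j w * (1\<^sub>m ((j+1)*q) - w \<cdot>\<^sub>m Tm q j) = 1\<^sub>m ((j+1)*q)"
    "(1\<^sub>m ((j+1)*q) - w \<cdot>\<^sub>m Tm q j) * Rm q j w = 1\<^sub>m ((j+1)*q)"
    unfolding Rm_def using m by auto
qed

lemma hcat_one_eq_embeddings: assumes A: "A \<in> carrier_mat q (j*q)"
  shows "hcat A (1\<^sub>m q) = A * adj_m (lead_emb q j) + adj_m (last_emb q j)"
proof -
  have "A * adj_m (lead_emb q j) = mat q ((j+1)*q) (\<lambda>(i,k). if k < j*q then A $$ (i,k) else 0)"
    using A by (subst mult_adj_lead_emb) auto
  then show ?thesis unfolding hcat_def using A
    by (intro eq_matI) (auto simp: last_emb_def)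
qed

lemma blockmat_1_1: "B 0 0 \<in> carrier_mat q q \<Longrightarrow> blockmat q (Suc 0) (Suc 0) B = B 0 0"
  by (rule eq_matI) auto

lemma Tm0: "Tm q 0 = 0\<^sub>m q q"
  unfolding Tm_def by (simp add: blockmat_1_1)

lemma Rm0: "Rm q 0 w = 1\<^sub>m q"
proof -
  have "1\<^sub>m ((0+1)*q) - w \<cdot>\<^sub>m Tm q 0 = 1\<^sub>m q" unfolding Tm0 by (rule eq_matI) auto
  then show ?thesis unfolding Rm_def by (metis minv_eqI one_carrier_mat right_mult_one_mat)
qed

lemma vm0: "vm q 0 = 1\<^sub>m q"
  unfolding vm_def by (simp add: blockmat_1_1)

lemma pos_def_mat_quadratic_form_nonzero:
  assumes "pos_def_mat N A" "v \<in> carrier_vec N" "v \<noteq> 0\<^sub>v N"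
  shows "(\<Sum>i<N. cnj (v $ i) * (A *\<^sub>v v) $ i) \<noteq> 0"
  using assms unfolding pos_def_mat_def Let_def by fastforce

lemma pos_def_mat_leading_submatrix_det:
  assumes pd: "pos_def_mat N A" and n: "n \<le> N" and B: "B \<in> carrier_mat n n"
    and entries: "\<And>i k. i < n \<Longrightarrow> k < n \<Longrightarrow> B $$ (i,k) = A $$ (i,k)"
  shows "det B \<noteq> 0"
proof
  assume "det B = 0"
  then obtain v where v: "v \<in> carrier_vec n" "v \<noteq> 0\<^sub>v n" "B *\<^sub>v v = 0\<^sub>v n"
    using det_0_iff_vec_prod_zero[OF B] by blast
  have A: "A \<in> carrier_mat N N" using pd unfolding pos_def_mat_def by blast
  define v' where "v' = vec N (\<lambda>i. if i < n then v $ i else 0)"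
  have v'_carrier: "v' \<in> carrier_vec N" unfolding v'_def by simp
  have v'_nonzero: "v' \<noteq> 0\<^sub>v N"
  proof
    assume v'_zero: "v' = 0\<^sub>v N"
    have "v = 0\<^sub>v n"
    proof (rule eq_vecI)
      fix i assume "i < dim_vec (0\<^sub>v n)"
      then have i: "i < n" "i < N" using n by auto
      have "v' $ i = 0" unfolding v'_zero using i by simp
      then show "v $ i = 0\<^sub>v n $ i" using i unfolding v'_def by simp
    qed (use v in auto)
    with v(2) show False by simp
  qed
  have Av': "(A *\<^sub>v v') $ i = 0" if i: "i < n" for i
  proof -
    have "(A *\<^sub>v v') $ i = (\<Sum>r = 0..<N. A $$ (i,r) * v' $ r)"
      using i n A v'_carrier by (simp add: scalar_prod_def)
    also have "\<dots> = (\<Sum>r = 0..<n. A $$ (i,r) * v' $ r)"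
      by (rule sum.mono_neutral_right) (use n in \<open>auto simp: v'_def\<close>)
    also have "\<dots> = (\<Sum>r = 0..<n. B $$ (i,r) * v $ r)"
      using i n by (intro sum.cong) (auto simp: v'_def entries)
    also have "\<dots> = (B *\<^sub>v v) $ i" using i v(1) B by (simp add: scalar_prod_def)
    finally show ?thesis using v(3) i by simp
  qed
  have "(\<Sum>i<N. cnj (v' $ i) * (A *\<^sub>v v') $ i) = 0"
  proof (rule sum.neutral, intro ballI)
    fix i assume "i \<in> {..<N}"
    then show "cnj (v' $ i) * (A *\<^sub>v v') $ i = 0"
      using Av'[of i] by (cases "i < n") (auto simp: v'_def)
  qed
  with pos_def_mat_quadratic_form_nonzero[OF pd v'_carrier v'_nonzero] show False by contradiction
qed

lemma pos_def_leading_section_det: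
  assumes pd: "pos_def_mat ((M+1)*q) (blockmat q (M+1) (M+1) (\<lambda>l k. cc (l+k)))" and jM: "j \<le> M"
  shows "det (blockmat q (j+1) (j+1) (\<lambda>l k. cc (l+k))) \<noteq> 0"
proof (rule pos_def_mat_leading_submatrix_det[OF pd _ blockmat_carrier])
  have le: "(j+1)*q \<le> (M+1)*q" using jM by simp
  then show "(j+1)*q \<le> (M+1)*q" .
  fix i k assume ik: "i < (j+1)*q" "k < (j+1)*q"
  with le have "i < (M+1)*q" "k < (M+1)*q" by linarith+
  with ik show "blockmat q (j+1) (j+1) (\<lambda>l k. cc (l+k)) $$ (i,k) = blockmat q (M+1) (M+1) (\<lambda>l k. cc (l+k)) $$ (i,k)"
    by simp
qed

lemma hermitian_entry: assumes "A \<in> carrier_mat q q" "adj_m A = A" "r < q" "c < q"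
  shows "cnj (A $$ (c,r)) = A $$ (r,c)"
proof -
  have "adj_m A $$ (r,c) = cnj (A $$ (c,r))" using assms(1,3,4) by simp
  then have "A $$ (r,c) = cnj (A $$ (c,r))" unfolding assms(2) .
  then show ?thesis by simp
qed

section \<open>Block Hankel matrices\<close>

text \<open>The column \<open>uu\<close> repeats the Hankel data shifted by one block, up to sign, below a
  Hermitian top block; this is what makes the Lyapunov identity \<open>lyapunov\<close> hold.\<close>

locale block_hankel =
  fixes q j :: nat and cc U :: "nat \<Rightarrow> complex mat"
  assumes q: "0 < q"
    and cc_hermitian: "\<And>m r c. m \<le> 2*j \<Longrightarrow> r < q \<Longrightarrow> c < q \<Longrightarrow> cnj (cc m $$ (c,r)) = cc m $$ (r,c)"
    and U0_hermitian: "\<And>r c. r < q \<Longrightarrow> c < q \<Longrightarrow> cnj (U 0 $$ (c,r)) = U 0 $$ (r,c)"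
    and U_shift: "\<And>l r c. 1 \<le> l \<Longrightarrow> l \<le> j \<Longrightarrow> r < q \<Longrightarrow> c < q \<Longrightarrow> U l $$ (r,c) = - (cc (l-1) $$ (r,c))"
begin

abbreviation "KK \<equiv> blockmat q (j+1) (j+1) (\<lambda>l k. cc (l+k))"
abbreviation "uu \<equiv> blockmat q (j+1) 1 (\<lambda>l k. U l)"

lemma hermitian: "adj_m KK = KK"
proof (rule eq_matI)
  fix i k assume "i < dim_row KK" "k < dim_col KK"
  then have i: "i < (j+1)*q" and k: "k < (j+1)*q" by auto
  have m: "k div q + i div q \<le> 2*j" using div_bound[OF i] div_bound[OF k] by simp
  show "adj_m KK $$ (i,k) = KK $$ (i,k)"
    using i k cc_hermitian[OF m, of "i mod q" "k mod q"] q by (simp add: add.commute)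
qed auto

lemma lyapunov: "Tm q j * KK - KK * adj_m (Tm q j) = vm q j * adj_m uu - uu * adj_m (vm q j)"
proof -
  have L: "Tm q j * KK - KK * adj_m (Tm q j) = mat ((j+1)*q) ((j+1)*q) (\<lambda>(i,k).
     (if q \<le> i then KK $$ (i-q,k) else 0) - (if q \<le> k then KK $$ (i,k-q) else 0))"
    by (subst Tm_mult[OF q], simp, subst mult_adj_Tm[OF q], simp, rule eq_matI, auto)
  have R: "vm q j * adj_m uu - uu * adj_m (vm q j) = mat ((j+1)*q) ((j+1)*q) (\<lambda>(i,k).
     (if i < q then cnj (uu $$ (k,i)) else 0) - (if k < q then uu $$ (i,k) else 0))"
    by (subst vm_mult[OF q], simp, subst mult_adj_vm[OF q], simp, rule eq_matI, auto)
  show ?thesis unfolding L R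
  proof (rule eq_matI)
    fix i k assume "i < dim_row (mat ((j+1)*q) ((j+1)*q) (\<lambda>(i,k).
     (if i < q then cnj (uu $$ (k,i)) else 0) - (if k < q then uu $$ (i,k) else 0)))"
      "k < dim_col (mat ((j+1)*q) ((j+1)*q) (\<lambda>(i,k).
     (if i < q then cnj (uu $$ (k,i)) else 0) - (if k < q then uu $$ (i,k) else 0)))"
    then have i: "i < (j+1)*q" and k: "k < (j+1)*q" by auto
    have bi: "i div q \<le> j" and bk: "k div q \<le> j" using div_bound[OF i] div_bound[OF k] by auto
    have mi: "i mod q < q" "k mod q < q" using q by auto
    show "mat ((j+1)*q) ((j+1)*q) (\<lambda>(i,k).
     (if q \<le> i then KK $$ (i-q,k) else 0) - (if q \<le> k then KK $$ (i,k-q) else 0)) $$ (i,k) =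
      mat ((j+1)*q) ((j+1)*q) (\<lambda>(i,k).
     (if i < q then cnj (uu $$ (k,i)) else 0) - (if k < q then uu $$ (i,k) else 0)) $$ (i,k)"
    proof (cases "q \<le> i"; cases "q \<le> k")
      assume a: "q \<le> i" "q \<le> k"
      have "(i - q) div q + k div q = i div q + (k - q) div q"
        using div_sub[OF q a(1)] div_sub[OF q a(2)] div_ge1[OF q a(1)] div_ge1[OF q a(2)] by simp
      then show ?thesis using a i k div_sub[OF q a(1)] div_sub[OF q a(2)] by auto
    next
      assume a: "q \<le> i" "\<not> q \<le> k"
      have l: "1 \<le> i div q" using div_ge1[OF q a(1)] .
      show ?thesis using a i k div_sub[OF q a(1)] U_shift[OF l bi mi(1), of k] div_lt1[of k q] by auto
    next
      assume a: "\<not> q \<le> i" "q \<le> k"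
      have l: "1 \<le> k div q" using div_ge1[OF q a(2)] .
      have m: "k div q - 1 \<le> 2 * j" using bk by simp
      show ?thesis using a i k div_sub[OF q a(2)] U_shift[OF l bk mi(2), of i] div_lt1[of i q]
        cc_hermitian[OF m, of i "k mod q"] by auto
    next
      assume a: "\<not> q \<le> i" "\<not> q \<le> k"
      show ?thesis using a i k U0_hermitian[of i k] div_lt1[of i q] div_lt1[of k q] by auto
    qed
  qed auto
qed

lemma leading_section: "adj_m (lead_emb q j) * KK * lead_emb q j = blockmat q j j (\<lambda>l k. cc (l+k))"
proof -
  have "adj_m (lead_emb q j) * KK * lead_emb q j = mat (j*q) (j*q) (\<lambda>(i,k). KK $$ (i,k))"
    by (subst adj_lead_emb_mult, simp, subst mult_lead_emb, simp, rule eq_matI, auto)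
  also have "\<dots> = blockmat q j j (\<lambda>l k. cc (l+k))"
  proof (rule eq_matI)
    fix i k assume "i < dim_row (blockmat q j j (\<lambda>l k. cc (l+k)))" "k < dim_col (blockmat q j j (\<lambda>l k. cc (l+k)))"
    then have i: "i < j*q" and k: "k < j*q" by auto
    then have "i < (j+1)*q" "k < (j+1)*q" by auto
    then show "mat (j*q) (j*q) (\<lambda>(i,k). KK $$ (i,k)) $$ (i,k) = blockmat q j j (\<lambda>l k. cc (l+k)) $$ (i,k)"
      using i k by simp
  qed auto
  finally show ?thesis .
qed

lemma last_column: "adj_m (lead_emb q j) * KK * last_emb q j = blockmat q j 1 (\<lambda>l k. cc (j+l))"
proof -
  have "adj_m (lead_emb q j) * KK * last_emb q j = mat (j*q) q (\<lambda>(i,k). KK $$ (i,j*q+k))"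
    by (subst adj_lead_emb_mult, simp, subst mult_last_emb, simp, rule eq_matI, auto)
  also have "\<dots> = blockmat q j 1 (\<lambda>l k. cc (j+l))"
  proof (rule eq_matI)
    fix i k assume "i < dim_row (blockmat q j 1 (\<lambda>l k. cc (j+l)))" "k < dim_col (blockmat q j 1 (\<lambda>l k. cc (j+l)))"
    then have i: "i < j*q" and k: "k < q" by auto
    then have "i < (j+1)*q" "j*q+k < (j+1)*q" by auto
    moreover have "(j*q+k) div q = j" "(j*q+k) mod q = k" using k by auto
    ultimately show "mat (j*q) q (\<lambda>(i,k). KK $$ (i,j*q+k)) $$ (i,k) = blockmat q j 1 (\<lambda>l k. cc (j+l)) $$ (i,k)"
      using i k by (simp add: add.commute)
  qed auto
  finally show ?thesis .
qed

lemma corner: assumes c: "cc (2*j) \<in> carrier_mat q q"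
  shows "adj_m (last_emb q j) * KK * last_emb q j = cc (2*j)"
proof -
  have "adj_m (last_emb q j) * KK * last_emb q j = mat q q (\<lambda>(i,k). KK $$ (j*q+i,j*q+k))"
    by (subst adj_last_emb_mult, simp, subst mult_last_emb, simp, rule eq_matI, auto)
  also have "\<dots> = cc (2*j)"
  proof (rule eq_matI)
    fix i k assume "i < dim_row (cc (2*j))" "k < dim_col (cc (2*j))"
    then have i: "i < q" and k: "k < q" using c by auto
    then have "j*q+i < (j+1)*q" "j*q+k < (j+1)*q" by auto
    moreover have "(j*q+k) div q = j" "(j*q+k) mod q = k" "(j*q+i) div q = j" "(j*q+i) mod q = i" using i k by auto
    ultimately show "mat q q (\<lambda>(i,k). KK $$ (j*q+i,j*q+k)) $$ (i,k) = cc (2*j) $$ (i,k)"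
      using i k by (simp add: mult_2)
  qed (use c in auto)
  finally show ?thesis .
qed

lemma leading_rows: "adj_m (lead_emb q j) * uu = blockmat q j 1 (\<lambda>l k. U l)"
proof -
  have "adj_m (lead_emb q j) * uu = mat (j*q) q (\<lambda>(i,k). uu $$ (i,k))"
    by (subst adj_lead_emb_mult, simp, rule eq_matI, auto)
  also have "\<dots> = blockmat q j 1 (\<lambda>l k. U l)"
    by (rule eq_matI) auto
  finally show ?thesis .
qed

end

lemma (in block_hankel) schur_step_instance:
  fixes a :: real and z :: complex
  assumes j: "1 \<le> j" and corner_carrier: "cc (2*j) \<in> carrier_mat q q"
    and K_eq: "K = KK" and u_eq: "u = uu"
    and K'_eq: "K' = blockmat q j j (\<lambda>l k. cc (l+k))" and Y_eq: "Y = blockmat q j 1 (\<lambda>l k. cc (j+l))"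
    and W_eq: "W = hcat (- (adj_m Y * minv K')) (1\<^sub>m q)" and Kh_eq: "Kh = cc (2*j) - adj_m Y * minv K' * Y"
    and det_K: "det K \<noteq> 0" and det_K': "det K' \<noteq> 0"
  shows "schur_step ((j+1)*q) (j*q) q K (Tm q j) (Tm q (j-1)) (lead_emb q j) (last_emb q j) u (vm q j)
    (Rm q j a) (Rm q j (cnj z)) (Rm q (j-1) a) (Rm q (j-1) (cnj z)) K' Y (cc (2*j)) W Kh a z"
proof -
  have jj: "j - 1 + 1 = j" using j by simp
  have K'_carrier: "K' \<in> carrier_mat (j*q) (j*q)" unfolding K'_eq by (rule blockmat_carrier)
  have Y_carrier: "Y \<in> carrier_mat (j*q) q" unfolding Y_eq by (rule blockmat_carrier1)
  have minv_K'_carrier: "minv K' \<in> carrier_mat (j*q) (j*q)" using minv_inverse[OF K'_carrier det_K'] by simp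
  show ?thesis
  proof unfold_locales
    show "K \<in> carrier_mat ((j+1)*q) ((j+1)*q)" unfolding K_eq by (rule blockmat_carrier)
    show "u \<in> carrier_mat ((j+1)*q) q" unfolding u_eq by (rule blockmat_carrier1)
    show "Tm q (j-1) \<in> carrier_mat (j*q) (j*q)" using Tm_carrier[of q "j-1"] unfolding jj .
    show "adj_m K = K" unfolding K_eq by (rule hermitian)
    show "K' = adj_m (lead_emb q j) * K * lead_emb q j" unfolding K_eq leading_section K'_eq ..
    show "Y = adj_m (lead_emb q j) * K * last_emb q j" unfolding K_eq last_column Y_eq ..
    show "cc (2*j) = adj_m (last_emb q j) * K * last_emb q j" unfolding K_eq corner[OF corner_carrier] ..
    show "W = - (adj_m Y * minv K') * adj_m (lead_emb q j) + adj_m (last_emb q j)"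
      unfolding W_eq by (rule hcat_one_eq_embeddings) (use Y_carrier minv_K'_carrier in auto)
    show "Tm q j * last_emb q j = 0\<^sub>m ((j+1)*q) q" by (rule Tm_mult_last_emb[OF q])
    show "adj_m (lead_emb q j) * Tm q j = Tm q (j-1) * adj_m (lead_emb q j)" by (rule adj_lead_emb_Tm[OF q j])
    show "Tm q j * K - K * adj_m (Tm q j) = vm q j * adj_m u - u * adj_m (vm q j)"
      unfolding K_eq u_eq by (rule lyapunov)
  qed (use Kh_eq det_K det_K' embeddings_orthogonal Tm_carrier lead_emb_carrier last_emb_carrier vm_carrier
      Rm_inverse[OF q, of j] Rm_inverse[OF q, of "j-1", unfolded jj] in auto)
qed

lemma (in block_hankel) resolvent_matrix_step:
  fixes a :: real and z :: complex
  assumes j: "1 \<le> j" and corner_carrier: "cc (2*j) \<in> carrier_mat q q"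
    and K_eq: "K = KK" and u_eq: "u = uu"
    and K'_eq: "K' = blockmat q j j (\<lambda>l k. cc (l+k))" and Y_eq: "Y = blockmat q j 1 (\<lambda>l k. cc (j+l))"
    and W_eq: "W = hcat (- (adj_m Y * minv K')) (1\<^sub>m q)" and Kh_eq: "Kh = cc (2*j) - adj_m Y * minv K' * Y"
    and det_K: "det K \<noteq> 0" and det_K': "det K' \<noteq> 0"
    and u'_eq: "u' = blockmat q j 1 (\<lambda>l k. U l)"
  shows "resolvent_matrix q (z - complex_of_real a) u (vm q j) (adj_m (Rm q j (cnj z))) (minv K) (Rm q j a)
    = resolvent_matrix q (z - complex_of_real a) u' (vm q (j-1)) (adj_m (Rm q (j-1) (cnj z))) (minv K') (Rm q (j-1) a)
      * bp_factor q (z - complex_of_real a) (W * Rm q j a * u) (W * Rm q j a * vm q j) (minv Kh)"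
proof -
  interpret schur_step "(j+1)*q" "j*q" q K "Tm q j" "Tm q (j-1)" "lead_emb q j" "last_emb q j" u "vm q j"
    "Rm q j a" "Rm q j (cnj z)" "Rm q (j-1) a" "Rm q (j-1) (cnj z)" K' Y "cc (2*j)" W Kh a z
    by (rule schur_step_instance[OF assms(1-10)])
  have u': "adj_m (lead_emb q j) * u = u'" unfolding u_eq u'_eq by (rule leading_rows)
  have v': "adj_m (lead_emb q j) * vm q j = vm q (j-1)" by (rule adj_lead_emb_vm[OF q j])
  show ?thesis using resolvent_matrix_factor unfolding u' v' .
qed

section \<open>The two chains of factorizations\<close>

lemma mprod_eqI:
  assumes "G 0 = g 0" and "\<And>k. 1 \<le> k \<Longrightarrow> k \<le> m \<Longrightarrow> G k = G (k - 1) * g k" and "j \<le> m"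
  shows "G j = mprod g j"
  using assms(3) by (induction j) (simp_all add: assms(1) assms(2)[of "Suc _", simplified])

locale moment_data =
  fixes q n :: nat and a b :: real and s :: "nat \<Rightarrow> complex mat"
  assumes q: "0 < q" and n_pos: "1 \<le> n"
    and s_hermitian: "\<And>j. j \<le> 2 * n + 1 \<Longrightarrow> s j \<in> carrier_mat q q \<and> adj_m (s j) = s j"
    and H2_pos_def: "pos_def_mat (n * q) (H2 q s a b (n - 1))"
    and K1_pos_def: "pos_def_mat ((n + 1) * q) (K1 q s b n)"
begin

lemma s_carrier: "m \<le> 2*n+1 \<Longrightarrow> s m \<in> carrier_mat q q"
  using s_hermitian by blast

lemma s_hermitian_entry: "m \<le> 2*n+1 \<Longrightarrow> r < q \<Longrightarrow> c < q \<Longrightarrow> cnj (s m $$ (c,r)) = s m $$ (r,c)"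
  using s_hermitian[of m] hermitian_entry[of "s m" q r c] by blast

definition "K1seq m = complex_of_real b \<cdot>\<^sub>m s m - s (m + 1)"
definition "K1col l = (if l = 0 then s 0 else s l - complex_of_real b \<cdot>\<^sub>m s (l - 1))"

lemma K1_blockmat: "K1 q s b j = blockmat q (j+1) (j+1) (\<lambda>l k. K1seq (l+k))"
  unfolding K1_def K1seq_def by simp

lemma ut1_blockmat: "ut1 q s b j = blockmat q (j+1) 1 (\<lambda>l k. K1col l)"
  unfolding ut1_def K1col_def by simp

lemma block_hankel_K1: assumes j: "j \<le> n" shows "block_hankel q j K1seq K1col"
proof
  show "0 < q" by (rule q)
  fix m r c assume m: "m \<le> 2*j" and r: "r < q" and c: "c < q"
  have m1: "m \<le> 2*n+1" "m+1 \<le> 2*n+1" using m j by auto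
  show "cnj (K1seq m $$ (c,r)) = K1seq m $$ (r,c)"
    unfolding K1seq_def using s_carrier[OF m1(1)] s_carrier[OF m1(2)] r c
      s_hermitian_entry[OF m1(1) r c] s_hermitian_entry[OF m1(2) r c] by simp
next
  fix r c assume r: "r < q" and c: "c < q"
  show "cnj (K1col 0 $$ (c,r)) = K1col 0 $$ (r,c)"
    unfolding K1col_def using s_hermitian_entry[of 0 r c] r c by simp
next
  fix l r c assume l: "1 \<le> l" "l \<le> j" and r: "r < q" and c: "c < q"
  have m1: "l \<le> 2*n+1" "l - 1 \<le> 2*n+1" "l - 1 + 1 = l" using l j by auto
  show "K1col l $$ (r,c) = - (K1seq (l-1) $$ (r,c))"
    unfolding K1col_def K1seq_def using l s_carrier[OF m1(1)] s_carrier[OF m1(2)] r c m1(3) by simp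
qed

lemma det_K1: assumes "j \<le> n" shows "det (K1 q s b j) \<noteq> 0"
  using pos_def_leading_section_det[of n q K1seq j] K1_pos_def assms unfolding K1_blockmat by simp

lemma U2til_0: "U2til q s a b 0 z = dodd q s a b 0 z"
proof -
  have K0: "K1 q s b 0 = K1hat q s b 0" unfolding K1_def K1hat_def
    by (rule eq_matI) (use s_carrier[of 0] s_carrier[of 1] in auto)
  have u0: "ut1 q s b 0 = s 0" unfolding ut1_def using s_carrier[of 0] by (simp add: blockmat_1_1)
  have K0_carrier: "K1hat q s b 0 \<in> carrier_mat q q" unfolding K1hat_def using s_carrier[of 0] s_carrier[of 1] by auto
  have "det (K1hat q s b 0) \<noteq> 0" using det_K1[of 0] unfolding K0 by simp
  then have Ki: "minv (K1hat q s b 0) \<in> carrier_mat q q" using minv_inverse[OF K0_carrier] by simp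
  have "U2til q s a b 0 z = resolvent_matrix q (z - complex_of_real a) (s 0) (1\<^sub>m q) (adj_m (1\<^sub>m q)) (minv (K1hat q s b 0)) (1\<^sub>m q)"
    unfolding U2til_def resolvent_matrix_def Let_def Rm0 vm0 u0 K0 ..
  also have "\<dots> = bp_factor q (z - complex_of_real a) (s 0) (1\<^sub>m q) (minv (K1hat q s b 0))"
    by (rule resolvent_matrix_size_one[OF s_carrier[of 0] Ki]) simp
  also have "\<dots> = dodd q s a b 0 z" unfolding dodd_def bp_factor_def Theta1_def Gam1_def Let_def by simp
  finally show ?thesis .
qed

lemma U2til_step: assumes j: "1 \<le> j" "j \<le> n"
  shows "U2til q s a b j z = U2til q s a b (j - 1) z * dodd q s a b j z"
proof -
  interpret H: block_hankel q j K1seq K1col by (rule block_hankel_K1[OF j(2)])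
  have jj: "j - 1 + 1 = j" using j by simp
  have corner: "K1seq (2*j) \<in> carrier_mat q q"
    unfolding K1seq_def using s_carrier[of "2*j"] s_carrier[of "2*j+1"] j by auto
  have K1_prev: "K1 q s b (j-1) = blockmat q j j (\<lambda>l k. K1seq (l+k))"
    using K1_blockmat[of "j-1"] unfolding jj .
  have ut1_prev: "ut1 q s b (j-1) = blockmat q j 1 (\<lambda>l k. K1col l)"
    using ut1_blockmat[of "j-1"] unfolding jj .
  have Yt1_eq: "Yt1 q s b j = blockmat q j 1 (\<lambda>l k. K1seq (j+l))"
    unfolding Yt1_def K1seq_def by (simp add: add.assoc)
  have K1hat_eq: "K1hat q s b j = K1seq (2*j) - adj_m (Yt1 q s b j) * minv (K1 q s b (j-1)) * Yt1 q s b j"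
    unfolding K1hat_def K1seq_def using j by simp
  have dets: "det (K1 q s b j) \<noteq> 0" "det (K1 q s b (j-1)) \<noteq> 0" using det_K1 j by simp_all
  have "U2til q s a b j z = resolvent_matrix q (z - complex_of_real a) (ut1 q s b j) (vm q j) (adj_m (Rm q j (cnj z))) (minv (K1 q s b j)) (Rm q j a)"
    unfolding U2til_def resolvent_matrix_def Let_def ..
  also have "\<dots> = resolvent_matrix q (z - complex_of_real a) (ut1 q s b (j-1)) (vm q (j-1)) (adj_m (Rm q (j-1) (cnj z))) (minv (K1 q s b (j-1))) (Rm q (j-1) a)
     * bp_factor q (z - complex_of_real a) (row1 q s b j * Rm q j a * ut1 q s b j) (row1 q s b j * Rm q j a * vm q j) (minv (K1hat q s b j))"
    by (rule H.resolvent_matrix_step[OF j(1) corner K1_blockmat ut1_blockmat K1_prev Yt1_eq row1_def K1hat_eq dets ut1_prev])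
  also have "\<dots> = U2til q s a b (j - 1) z * dodd q s a b j z"
    unfolding U2til_def resolvent_matrix_def bp_factor_def dodd_def Let_def Theta1_def Gam1_def using j by simp
  finally show ?thesis .
qed

lemma U2til_eq_mprod: "j \<le> n \<Longrightarrow> U2til q s a b j z = mprod (\<lambda>k. dodd q s a b k z) j"
  by (rule mprod_eqI[of "\<lambda>j. U2til q s a b j z" _ n]) (simp_all add: U2til_0 U2til_step)

definition "H2col l = (if l = 0 then u20 s a b + complex_of_real a \<cdot>\<^sub>m s 0 else - shat s a b (l - 1))"
definition "u2a j = u2 q s a b j + complex_of_real a \<cdot>\<^sub>m (vm q j * s 0)"

lemma shat_carrier: "m + 2 \<le> 2*n+1 \<Longrightarrow> shat s a b m \<in> carrier_mat q q"
  unfolding shat_def using s_carrier[of m] s_carrier[of "m+1"] s_carrier[of "m+2"] by auto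

lemma H2_blockmat: "H2 q s a b j = blockmat q (j+1) (j+1) (\<lambda>l k. shat s a b (l+k))"
  unfolding H2_def ..

lemma block_hankel_H2: assumes j: "j + 1 \<le> n" shows "block_hankel q j (shat s a b) H2col"
proof
  show "0 < q" by (rule q)
  fix m r c assume m: "m \<le> 2*j" and r: "r < q" and c: "c < q"
  have m1: "m \<le> 2*n+1" "m+1 \<le> 2*n+1" "m+2 \<le> 2*n+1" using m j by auto
  show "cnj (shat s a b m $$ (c,r)) = shat s a b m $$ (r,c)"
    unfolding shat_def using s_carrier[OF m1(1)] s_carrier[OF m1(2)] s_carrier[OF m1(3)] r c
      s_hermitian_entry[OF m1(1) r c] s_hermitian_entry[OF m1(2) r c] s_hermitian_entry[OF m1(3) r c] by simp
next
  fix r c assume r: "r < q" and c: "c < q"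
  show "cnj (H2col 0 $$ (c,r)) = H2col 0 $$ (r,c)" unfolding H2col_def u20_def
    using s_hermitian_entry[of 0 r c] s_hermitian_entry[of 1 r c] s_carrier[of 0] s_carrier[of 1] r c by simp
next
  fix l r c assume l: "1 \<le> l" "l \<le> j" and r: "r < q" and c: "c < q"
  have "l - 1 + 2 \<le> 2*n+1" using l j by auto
  then show "H2col l $$ (r,c) = - (shat s a b (l-1) $$ (r,c))"
    unfolding H2col_def using l shat_carrier[of "l-1"] r c by simp
qed

lemma u2a_blockmat: assumes j: "j + 1 \<le> n" shows "u2a j = blockmat q (j+1) 1 (\<lambda>l k. H2col l)"
proof (rule eq_matI)
  fix i k assume "i < dim_row (blockmat q (j+1) 1 (\<lambda>l k. H2col l))" "k < dim_col (blockmat q (j+1) 1 (\<lambda>l k. H2col l))"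
  then have i: "i < (j+1)*q" and k: "k < q" by auto
  have vs: "vm q j * s 0 = mat ((j+1)*q) q (\<lambda>(i,k). if i < q then s 0 $$ (i,k) else 0)"
    using vm_mult[OF q, of "s 0" j] s_carrier[of 0] by simp
  show "u2a j $$ (i,k) = blockmat q (j+1) 1 (\<lambda>l k. H2col l) $$ (i,k)"
  proof (cases "i < q")
    case True
    then show ?thesis unfolding u2a_def vs u2_def H2col_def u20_def using i k s_carrier[of 0] s_carrier[of 1] by simp
  next
    case False
    have "i div q - 1 + 2 \<le> 2*n+1" using div_bound[OF i] j by auto
    then show ?thesis unfolding u2a_def vs u2_def H2col_def using i k False shat_carrier[of "i div q - 1"] q
      by (simp add: div_eq_0_iff)
  qed
qed (use s_carrier[of 0] in \<open>auto simp: u2a_def u2_def\<close>)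

lemma det_H2: assumes "j + 1 \<le> n" shows "det (H2 q s a b j) \<noteq> 0"
proof -
  have nn: "n - 1 + 1 = n" using n_pos by simp
  have pd: "pos_def_mat ((n-1+1)*q) (blockmat q (n-1+1) (n-1+1) (\<lambda>l k. shat s a b (l+k)))"
    using H2_pos_def unfolding H2_blockmat nn .
  show ?thesis using pos_def_leading_section_det[OF pd, of j] assms unfolding H2_blockmat by simp
qed


definition "V2hat j z = resolvent_matrix q (z - complex_of_real a) (u2a j) (vm q j) (adj_m (Rm q j (cnj z))) (minv (H2 q s a b j)) (Rm q j a)"

lemma U2hat_eq_d0_mult: assumes j: "j + 1 \<le> n" shows "U2hat q s a b j z = d0 q s a z * V2hat j z"
proof -
  let ?za = "z - complex_of_real a"
  let ?Rs = "adj_m (Rm q j (cnj z))" let ?Hi = "minv (H2 q s a b j)" let ?Ra = "Rm q j a"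
  let ?v = "vm q j" let ?u = "u2 q s a b j" let ?ua = "u2a j" let ?s = "s 0"
  have Hc: "H2 q s a b j \<in> carrier_mat ((j+1)*q) ((j+1)*q)" unfolding H2_blockmat by (rule blockmat_carrier)
  have Hi: "?Hi \<in> carrier_mat ((j+1)*q) ((j+1)*q)" using minv_inverse[OF Hc det_H2[OF j]] by simp
  have uc: "?u \<in> carrier_mat ((j+1)*q) q" unfolding u2_def by (rule blockmat_carrier1)
  have uac: "?ua \<in> carrier_mat ((j+1)*q) q" unfolding u2a_blockmat[OF j] by (rule blockmat_carrier1)
  have Rsc: "?Rs \<in> carrier_mat ((j+1)*q) ((j+1)*q)" using Rm_inverse(1)[OF q] by simp
  have Rac: "?Ra \<in> carrier_mat ((j+1)*q) ((j+1)*q)" using Rm_inverse(1)[OF q] by simp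
  have Rwc: "Rm q j (cnj z) \<in> carrier_mat ((j+1)*q) ((j+1)*q)" using Rm_inverse(1)[OF q] by simp
  have vc: "?v \<in> carrier_mat ((j+1)*q) q" by (rule vm_carrier)
  have s0: "?s \<in> carrier_mat q q" "adj_m ?s = ?s" using s_hermitian[of 0] by auto
  note cs = Hi uc uac Rsc Rac Rwc vc s0(1)
  note dms = cs[THEN carrier_matD(1)] cs[THEN carrier_matD(2)]
  have aua: "adj_m ?ua = adj_m ?u + complex_of_real a \<cdot>\<^sub>m (?s * adj_m ?v)"
    unfolding u2a_def using s0 by (simp add: mat_dim_simps dms)
  have w: "adj_m ?u + z \<cdot>\<^sub>m (?s * adj_m ?v) = adj_m ?ua + ?za \<cdot>\<^sub>m (?s * adj_m ?v)"
    unfolding aua by (rule eq_matI) (auto simp: dms algebra_simps)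
  define P11 where "P11 = ?za \<cdot>\<^sub>m (adj_m ?ua * ?Rs * ?Hi * ?Ra * ?v)"
  define P12 where "P12 = ?za \<cdot>\<^sub>m (adj_m ?ua * ?Rs * ?Hi * ?Ra * ?ua)"
  define P21 where "P21 = ?za \<cdot>\<^sub>m (adj_m ?v * ?Rs * ?Hi * ?Ra * ?v)"
  define P22 where "P22 = ?za \<cdot>\<^sub>m (adj_m ?v * ?Rs * ?Hi * ?Ra * ?ua)"
  define S where "S = ?za \<cdot>\<^sub>m ?s"
  have r1: "?za \<cdot>\<^sub>m ((adj_m ?ua + ?za \<cdot>\<^sub>m (?s * adj_m ?v)) * ?Rs * ?Hi * ?Ra * ?v) = P11 + S * P21"
    unfolding P11_def P21_def S_def by (simp add: mat_dim_simps smult_add_mat_dim dms)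
  have r2: "?za \<cdot>\<^sub>m (?s + (adj_m ?ua + ?za \<cdot>\<^sub>m (?s * adj_m ?v)) * ?Rs * ?Hi * ?Ra * ?ua) = S + (P12 + S * P22)"
    unfolding P12_def P22_def S_def by (simp add: mat_dim_simps smult_add_mat_dim dms)
  have c: "S \<in> carrier_mat q q" "P11 \<in> carrier_mat q q" "P12 \<in> carrier_mat q q" "P21 \<in> carrier_mat q q" "P22 \<in> carrier_mat q q"
    unfolding S_def P11_def P12_def P21_def P22_def using cs by (auto intro!: mult_carrier_mat)
  have "U2hat q s a b j z = four_block_mat (1\<^sub>m q - (P11 + S * P21)) (S + (P12 + S * P22)) (- P21) (1\<^sub>m q + P22)"
    unfolding U2hat_def Let_def u2a_def[symmetric] w r1 r2 P21_def P22_def ..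
  also have "\<dots> = four_block_mat (1\<^sub>m q) S (0\<^sub>m q q) (1\<^sub>m q) * four_block_mat (1\<^sub>m q - P11) P12 (- P21) (1\<^sub>m q + P22)"
    by (rule four_block_shear_mult[OF c])
  also have "\<dots> = d0 q s a z * V2hat j z"
    unfolding d0_def V2hat_def resolvent_matrix_def S_def P11_def P12_def P21_def P22_def ..
  finally show ?thesis .
qed

lemma V2hat_0: "V2hat 0 z = deven q s a b 0 z"
proof -
  have H0: "H2 q s a b 0 = H2hat q s a b 0" unfolding H2_def H2hat_def
    by (rule eq_matI) (use shat_carrier[of 0] n_pos in auto)
  have H0_carrier: "H2hat q s a b 0 \<in> carrier_mat q q" unfolding H2hat_def using shat_carrier[of 0] n_pos by auto
  have "det (H2hat q s a b 0) \<noteq> 0" using det_H2[of 0] n_pos unfolding H0 by simp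
  then have Hi: "minv (H2hat q s a b 0) \<in> carrier_mat q q" using minv_inverse[OF H0_carrier] by simp
  have u20_carrier: "u20 s a b \<in> carrier_mat q q" unfolding u20_def using s_carrier[of 0] s_carrier[of 1] by auto
  have ua0: "u2a 0 = u20 s a b + complex_of_real a \<cdot>\<^sub>m s 0" unfolding u2a_def vm0
    by (rule eq_matI) (use s_carrier[of 0] u20_carrier in \<open>auto simp: u2_def\<close>)
  have X: "u20 s a b + complex_of_real a \<cdot>\<^sub>m s 0 \<in> carrier_mat q q" using s_carrier[of 0] u20_carrier by auto
  have "V2hat 0 z = resolvent_matrix q (z - complex_of_real a) (u20 s a b + complex_of_real a \<cdot>\<^sub>m s 0) (1\<^sub>m q) (adj_m (1\<^sub>m q)) (minv (H2hat q s a b 0)) (1\<^sub>m q)"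
    unfolding V2hat_def Rm0 vm0 ua0 H0 ..
  also have "\<dots> = bp_factor q (z - complex_of_real a) (u20 s a b + complex_of_real a \<cdot>\<^sub>m s 0) (1\<^sub>m q) (minv (H2hat q s a b 0))"
    by (rule resolvent_matrix_size_one[OF X Hi])
  also have "\<dots> = deven q s a b 0 z"
    unfolding four_block_uminus_eq_bp_factor[OF X one_carrier_mat Hi, symmetric]
    unfolding deven_def Let_def P2_def Q2_def by simp
  finally show ?thesis .
qed

lemma V2hat_step: assumes j: "1 \<le> j" "j + 1 \<le> n"
  shows "V2hat j z = V2hat (j - 1) z * deven q s a b j z"
proof -
  interpret H: block_hankel q j "shat s a b" H2col by (rule block_hankel_H2[OF j(2)])
  have jj: "j - 1 + 1 = j" using j by simp
  have corner: "shat s a b (2*j) \<in> carrier_mat q q" using shat_carrier[of "2*j"] j by auto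
  have H2_prev: "H2 q s a b (j-1) = blockmat q j j (\<lambda>l k. shat s a b (l+k))"
    using H2_blockmat[of "j-1"] unfolding jj .
  have "j - 1 + 1 \<le> n" using j by simp
  from u2a_blockmat[OF this] have u2a_prev: "u2a (j-1) = blockmat q j 1 (\<lambda>l k. H2col l)"
    unfolding jj .
  have Y2_eq: "Y2 q s a b j = blockmat q j 1 (\<lambda>l k. shat s a b (j+l))" unfolding Y2_def ..
  have H2hat_eq: "H2hat q s a b j = shat s a b (2*j) - adj_m (Y2 q s a b j) * minv (H2 q s a b (j-1)) * Y2 q s a b j"
    unfolding H2hat_def using j by simp
  have dets: "det (H2 q s a b j) \<noteq> 0" "det (H2 q s a b (j-1)) \<noteq> 0" using det_H2 j by simp_all
  note step = j(1) corner H2_blockmat u2a_blockmat[OF j(2)] H2_prev Y2_eq row2_def H2hat_eq dets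
  interpret S: schur_step "(j+1)*q" "j*q" q "H2 q s a b j" "Tm q j" "Tm q (j-1)" "lead_emb q j" "last_emb q j"
    "u2a j" "vm q j" "Rm q j a" "Rm q j (cnj z)" "Rm q (j-1) a" "Rm q (j-1) (cnj z)"
    "H2 q s a b (j-1)" "Y2 q s a b j" "shat s a b (2*j)" "row2 q s a b j" "H2hat q s a b j" a z
    by (rule H.schur_step_instance[OF step])
  have X: "row2 q s a b j * Rm q j a * u2a j \<in> carrier_mat q q"
    "row2 q s a b j * Rm q j a * vm q j \<in> carrier_mat q q"
    using S.carriers by (auto intro!: mult_carrier_mat)
  have "V2hat j z = resolvent_matrix q (z - complex_of_real a) (u2a j) (vm q j) (adj_m (Rm q j (cnj z))) (minv (H2 q s a b j)) (Rm q j a)"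
    unfolding V2hat_def ..
  also have "\<dots> = resolvent_matrix q (z - complex_of_real a) (u2a (j-1)) (vm q (j-1)) (adj_m (Rm q (j-1) (cnj z))) (minv (H2 q s a b (j-1))) (Rm q (j-1) a)
     * bp_factor q (z - complex_of_real a) (row2 q s a b j * Rm q j a * u2a j) (row2 q s a b j * Rm q j a * vm q j) (minv (H2hat q s a b j))"
    by (rule H.resolvent_matrix_step[OF step u2a_prev])
  also have "\<dots> = V2hat (j - 1) z * deven q s a b j z"
    unfolding V2hat_def four_block_uminus_eq_bp_factor[OF X S.minv_Kh(1), symmetric]
    unfolding deven_def Let_def P2_def Q2_def u2a_def using j by simp
  finally show ?thesis .
qed

lemma d0_carrier: "d0 q s a z \<in> carrier_mat (q+q) (q+q)"
  unfolding d0_def by (rule four_block_carrier_mat) auto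

lemma V2hat_carrier: assumes j: "j + 1 \<le> n" shows "V2hat j z \<in> carrier_mat (q+q) (q+q)"
proof -
  have "u2a j \<in> carrier_mat ((j+1)*q) q" unfolding u2a_blockmat[OF j] by (rule blockmat_carrier1)
  then show ?thesis unfolding V2hat_def resolvent_matrix_def
    by (intro four_block_carrier_mat carrier_matI) (use vm_carrier[of q j] in auto)
qed

lemma deven_carrier: "deven q s a b j z \<in> carrier_mat (q+q) (q+q)"
proof -
  have "dim_row (s 0) = q" "dim_col (s 0) = q" using s_carrier[of 0] by auto
  then show ?thesis unfolding deven_def Let_def
    by (intro four_block_carrier_mat carrier_matI) (auto simp: P2_def Q2_def)
qed

lemma U2hat_0: "U2hat q s a b 0 z = d0 q s a z * deven q s a b 0 z"
  using U2hat_eq_d0_mult[of 0] V2hat_0 n_pos by simp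

lemma U2hat_step: assumes j: "1 \<le> j" "j \<le> n - 1"
  shows "U2hat q s a b j z = U2hat q s a b (j - 1) z * deven q s a b j z"
proof -
  have j': "j + 1 \<le> n" "j - 1 + 1 \<le> n" using j by auto
  have "U2hat q s a b j z = d0 q s a z * (V2hat (j-1) z * deven q s a b j z)"
    unfolding U2hat_eq_d0_mult[OF j'(1)] V2hat_step[OF j(1) j'(1)] ..
  also have "\<dots> = d0 q s a z * V2hat (j-1) z * deven q s a b j z"
    using assoc_mult_mat[OF d0_carrier V2hat_carrier[OF j'(2)] deven_carrier] by simp
  also have "\<dots> = U2hat q s a b (j - 1) z * deven q s a b j z" unfolding U2hat_eq_d0_mult[OF j'(2)] ..
  finally show ?thesis .
qed

lemma U2hat_eq_mprod: assumes j: "j \<le> n - 1"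
  shows "U2hat q s a b j z = d0 q s a z * mprod (\<lambda>k. deven q s a b k z) j"
proof -
  have "V2hat j z = mprod (\<lambda>k. deven q s a b k z) j"
    using j n_pos by (intro mprod_eqI[of "\<lambda>j. V2hat j z" _ "n - 1"]) (auto simp: V2hat_0 V2hat_step)
  then show ?thesis using U2hat_eq_d0_mult j n_pos by simp
qed

end

theorem mainTheorem3:
  fixes q n :: nat and a b :: real and s :: "nat \<Rightarrow> complex mat"
  assumes "q \<ge> 1" and "n \<ge> 1" and "a < b"
    and "\<And>j. j \<le> 2 * n + 1 \<Longrightarrow> s j \<in> carrier_mat q q \<and> adj_m (s j) = s j"
    and "pos_def_mat (n * q) (H2 q s a b (n - 1))"
    and "pos_def_mat ((n + 1) * q) (K1 q s b n)"
  shows "\<forall>z :: complex.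
      U2hat q s a b 0 z = d0 q s a z * deven q s a b 0 z
    \<and> U2til q s a b 0 z = dodd q s a b 0 z
    \<and> (\<forall>j. 1 \<le> j \<and> j \<le> n - 1 \<longrightarrow> U2hat q s a b j z = U2hat q s a b (j - 1) z * deven q s a b j z)
    \<and> (\<forall>j. 1 \<le> j \<and> j \<le> n \<longrightarrow> U2til q s a b j z = U2til q s a b (j - 1) z * dodd q s a b j z)
    \<and> (\<forall>j. j \<le> n - 1 \<longrightarrow> U2hat q s a b j z = d0 q s a z * mprod (\<lambda>k. deven q s a b k z) j)
    \<and> (\<forall>j. j \<le> n \<longrightarrow> U2til q s a b j z = mprod (\<lambda>k. dodd q s a b k z) j)"
proof -
  interpret moment_data q n a b s
    using assms by unfold_locales auto
  show ?thesis
    by (intro allI conjI impI; blast intro: U2hat_0 U2til_0 U2hat_step U2til_step U2hat_eq_mprod U2til_eq_mprod)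
qed

end
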